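(* Let $F$ and $\tilde F$ be continuous distribution functions of positive random variables with finite means $\overline{\tau}$ and $\tilde{\overline{\tau}}$ and infinite variances, i.e. $\int_0^\infty 2s(1-F(s))\,ds=\int_0^\infty 2s(1-\tilde F(s))\,ds=\infty$. Let $M_{eq}$ and $\tilde M_{eq}$ be the equilibrium mean square displacements associated with $F$ and $\tilde F$ respectively (with the same velocity distribution, $E[|V_i|^2]=v^2$). Assume $1-F(t)\sim1-\tilde F(t)$ as $t\to\infty$. Then $$\overline{\tau}\,M_{eq}(t)\sim\tilde{\overline{\tau}}\,\tilde M_{eq}(t)\quad\text{as }t\to\infty.$$
   Context: Equilibrium mean square displacement associated with $F$: let $\overline{\tau}=\int_0^\infty(1-F(s))\,ds$, let $\tau_1,\tau_2,\dots$ be i.i.d. with distribution $F$, let $T_0$ be independent of the $\tau_i$ with distribution function $F_0(t)=\frac1{\overline{\tau}}\int_0^t(1-F(s))\,ds$, and $T_i=T_{i-1}+\tau_i$. Let $V_0,V_1,\dots$ be i.i.d. random vectors in $\mathbb{R}^d$, independent of the times, with $E[V_i]=0$ and $E[|V_i|^2]=v^2\in(0,\infty)$. Set $V(t)=V_0$ for $0\le t<T_0$, $V(t)=V_i$ for $T_{i-1}\le t<T_i$, $X(t)=\int_0^tV(s)\,ds$, and $M_{eq}(t)=E[|X(t)|^2]$. $\tilde M_{eq}$ is defined in the same way from $\tilde F$. *)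

theory Defs
  imports "HOL-Probability.Probability" "HOL-Library.Landau_Symbols"
begin

text \<open>Mean of a positive random variable with distribution function F:
  the integral of the tail 1 - F over [0,\<infinity>).\<close>
definition mean_time :: "(real \<Rightarrow> real) \<Rightarrow> real" where
  "mean_time F = (LBINT s:{0..}. 1 - F s)"

text \<open>Renewal epochs: S 0 = T_0, S (Suc k) = tau_(Suc k), and T_i = S 0 + ... + S i.\<close>
definition renewal_epoch :: "(nat \<Rightarrow> 'a \<Rightarrow> real) \<Rightarrow> nat \<Rightarrow> 'a \<Rightarrow> real" where
  "renewal_epoch S i \<omega> = (\<Sum>k\<le>i. S k \<omega>)"

text \<open>V(t) = V_0 for t < T_0 and V(t) = V_i for T_(i-1) \<le> t < T_i.\<close>
definition velocity_proc ::
  "(nat \<Rightarrow> 'a \<Rightarrow> real) \<Rightarrow> (nat \<Rightarrow> 'a \<Rightarrow> 'v) \<Rightarrow> real \<Rightarrow> 'a \<Rightarrow> 'v" where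
  "velocity_proc S V t \<omega> = V (LEAST i. t < renewal_epoch S i \<omega>) \<omega>"

definition displacement ::
  "(nat \<Rightarrow> 'a \<Rightarrow> real) \<Rightarrow> (nat \<Rightarrow> 'a \<Rightarrow> 'v::euclidean_space) \<Rightarrow> real \<Rightarrow> 'a \<Rightarrow> 'v" where
  "displacement S V t \<omega> = (LINT s:{0..t}|lborel. velocity_proc S V s \<omega>)"

definition msd ::
  "'a measure \<Rightarrow> (nat \<Rightarrow> 'a \<Rightarrow> real) \<Rightarrow> (nat \<Rightarrow> 'a \<Rightarrow> 'v::euclidean_space) \<Rightarrow> real \<Rightarrow> real" where
  "msd M S V t = (\<integral>\<omega>. (norm (displacement S V t \<omega>))^2 \<partial>M)"

text \<open>Equilibrium renewal setup on a probability space M with inter-event distribution F: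
  S 0 = T_0 has the equilibrium distribution F_0, S (Suc k) = tau_(k+1) has distribution F,
  all S k are independent, V k are i.i.d., and the family V is independent of the family S.\<close>
definition eq_renewal_setup ::
  "'a measure \<Rightarrow> (real \<Rightarrow> real) \<Rightarrow> (nat \<Rightarrow> 'a \<Rightarrow> real) \<Rightarrow> (nat \<Rightarrow> 'a \<Rightarrow> 'v::euclidean_space) \<Rightarrow> bool" where
  "eq_renewal_setup M F S V \<longleftrightarrow>
     prob_space M \<and>
     prob_space.indep_vars M (\<lambda>_. borel) S UNIV \<and>
     prob_space.indep_vars M (\<lambda>_. borel) V UNIV \<and>
     prob_space.indep_set M
       (sigma_sets (space M) (\<Union>k. {S k -` A \<inter> space M | A. A \<in> sets borel}))
       (sigma_sets (space M) (\<Union>k. {V k -` B \<inter> space M | B. B \<in> sets borel})) \<and>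
     (\<forall>k t. measure M {\<omega> \<in> space M. S (Suc k) \<omega> \<le> t} = F t) \<and>
     (\<forall>t. measure M {\<omega> \<in> space M. S 0 \<omega> \<le> t} = (LBINT s:{0..t}. 1 - F s) / mean_time F) \<and>
     (\<forall>i. distr M borel (V i) = distr M borel (V 0))"

end

theory Submission
  imports Defs
begin

text \<open>
  Let \<open>L\<^sub>i(t)\<close> be the time up to \<open>t\<close> during which the velocity equals \<open>V\<^sub>i\<close>, so that
  \<open>X(t) = \<Sum>\<^sub>i L\<^sub>i(t) V\<^sub>i\<close>. The velocities are centred, uncorrelated and independent of the
  renewal times, hence \<open>E|X(t)|\<^sup>2 = v\<^sup>2 \<Sum>\<^sub>i E[L\<^sub>i(t)\<^sup>2]\<close>. Let \<open>m\<close> be the mean inter-event time.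
  By the layer-cake formula the first interval contributes \<open>\<integral>\<^sub>0\<^sup>t 2s G(s) ds / m\<close> with
  \<open>G(s) = \<integral>\<^sub>s\<^sup>\<infinity> (1 - F)\<close>, and since the equilibrium renewal process has the constant renewal
  density \<open>1 / m\<close>, the later intervals contribute \<open>\<integral>\<^sub>0\<^sup>t W(s) ds / m\<close> with
  \<open>W(s) = E[min(\<tau>\<^sub>1, s)\<^sup>2]\<close>. Thus \<open>m M\<^sub>e\<^sub>q(t) = v\<^sup>2 \<integral>\<^sub>0\<^sup>t (2s G(s) + W(s)) ds\<close>.
  Infinite variance means \<open>W(s) \<rightarrow> \<infinity>\<close>, so this integral diverges, and the equivalence
  \<open>1 - F \<sim> 1 - F'\<close> of the tails passes to \<open>G\<close>, to \<open>W\<close> and finally to the divergent integral.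
\<close>

section \<open>Asymptotic equivalence of integrals\<close>

lemma asymp_equiv_add_nonneg:
  fixes f1 f2 g1 g2 :: "'a \<Rightarrow> real"
  assumes "f1 \<sim>[F] g1" "f2 \<sim>[F] g2" and "eventually (\<lambda>x. 0 \<le> g1 x \<and> 0 \<le> g2 x) F"
  shows "(\<lambda>x. f1 x + f2 x) \<sim>[F] (\<lambda>x. g1 x + g2 x)"
  unfolding asymp_equiv_altdef
proof (rule landau_o.smallI)
  fix c :: real assume c: "c > 0"
  have "(\<lambda>x. f1 x - g1 x) \<in> o[F](g1)" "(\<lambda>x. f2 x - g2 x) \<in> o[F](g2)"
    using assms(1,2) unfolding asymp_equiv_altdef by auto
  from landau_o.smallD[OF this(1) c] landau_o.smallD[OF this(2) c] assms(3)
  show "eventually (\<lambda>x. norm (f1 x + f2 x - (g1 x + g2 x)) \<le> c * norm (g1 x + g2 x)) F"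
    by eventually_elim (simp add: abs_le_iff algebra_simps)
qed

lemma abs_set_integral_diff_le:
  fixes f g :: "real \<Rightarrow> real"
  assumes f_nonneg: "\<And>s. 0 \<le> s \<Longrightarrow> 0 \<le> f s"
    and f_int: "\<And>t. set_integrable lborel {0..t} f" and g_int: "\<And>t. set_integrable lborel {0..t} g"
    and close: "\<And>s. x0 \<le> s \<Longrightarrow> \<bar>g s - f s\<bar> \<le> c * \<bar>f s\<bar>" and "0 \<le> c"
  shows "\<bar>(LBINT s:{0..t}. g s) - (LBINT s:{0..t}. f s)\<bar>
           \<le> (LBINT s:{0..x0}. \<bar>g s - f s\<bar>) + c * (LBINT s:{0..t}. f s)"
proof -
  have diff_int: "set_integrable lborel {0..x} (\<lambda>s. g s - f s)" for x
    using g_int f_int by (rule set_integral_diff(1))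
  have initial_int: "set_integrable lborel A (\<lambda>s. indicator {0..x0} s * \<bar>g s - f s\<bar>)"
    if "A \<in> sets lborel" for A
  proof -
    have "set_integrable lborel (A \<inter> {0..x0}) (\<lambda>s. \<bar>g s - f s\<bar>)"
      using that by (intro set_integrable_subset[OF set_integrable_abs[OF diff_int]]) auto
    then show ?thesis
      unfolding set_integrable_def by (simp add: indicator_inter_arith mult_ac)
  qed
  have initial: "(LBINT s:{0..t}. indicator {0..x0} s * \<bar>g s - f s\<bar>) \<le> (LBINT s:{0..x0}. \<bar>g s - f s\<bar>)"
    unfolding set_lebesgue_integral_def
  proof (rule integral_mono)
    show "integrable lborel (\<lambda>s. indicator {0..x0} s *\<^sub>R \<bar>g s - f s\<bar>)"
      using set_integrable_abs[OF diff_int] unfolding set_integrable_def .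
    show "integrable lborel (\<lambda>s. indicator {0..t} s *\<^sub>R (indicator {0..x0} s * \<bar>g s - f s\<bar>))"
      using initial_int[of "{0..t}"] unfolding set_integrable_def by simp
  qed (auto simp: indicator_def)
  have "\<bar>(LBINT s:{0..t}. g s) - (LBINT s:{0..t}. f s)\<bar> = \<bar>LBINT s:{0..t}. g s - f s\<bar>"
    using f_int g_int by (simp add: set_integral_diff)
  also have "\<dots> \<le> (LBINT s:{0..t}. \<bar>g s - f s\<bar>)"
    using set_integral_norm_bound[OF diff_int] by simp
  also have "\<dots> \<le> (LBINT s:{0..t}. c * f s + indicator {0..x0} s * \<bar>g s - f s\<bar>)"
  proof (rule set_integral_mono)
    show "set_integrable lborel {0..t} (\<lambda>s. c * f s + indicator {0..x0} s * \<bar>g s - f s\<bar>)"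
      using f_int initial_int by (intro set_integral_add(1) set_integrable_mult_right) auto
    fix s assume s: "s \<in> {0..t}"
    show "\<bar>g s - f s\<bar> \<le> c * f s + indicator {0..x0} s * \<bar>g s - f s\<bar>"
    proof (cases "x0 \<le> s")
      case True
      then have "\<bar>g s - f s\<bar> \<le> c * f s"
        using close[of s] f_nonneg[of s] s by simp
      then show ?thesis using f_nonneg[of s] s \<open>0 \<le> c\<close> by (simp add: indicator_def)
    next
      case False
      then show ?thesis using f_nonneg[of s] s \<open>0 \<le> c\<close> by (simp add: indicator_def)
    qed
  qed (rule set_integrable_abs[OF diff_int])
  also have "\<dots> = c * (LBINT s:{0..t}. f s) + (LBINT s:{0..t}. indicator {0..x0} s * \<bar>g s - f s\<bar>)"
    using f_int initial_int by (simp add: set_integral_add set_integrable_mult_right)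
  finally show ?thesis
    using initial by linarith
qed

lemma asymp_equiv_set_integral_at_top:
  fixes f g :: "real \<Rightarrow> real"
  assumes f_nonneg: "\<And>s. 0 \<le> s \<Longrightarrow> 0 \<le> f s"
    and f_int: "\<And>t. set_integrable lborel {0..t} f" and g_int: "\<And>t. set_integrable lborel {0..t} g"
    and "f \<sim>[at_top] g"
    and diverges: "filterlim (\<lambda>t. LBINT s:{0..t}. f s) at_top at_top"
  shows "(\<lambda>t. LBINT s:{0..t}. f s) \<sim>[at_top] (\<lambda>t. LBINT s:{0..t}. g s)"
proof -
  have "(\<lambda>t. (LBINT s:{0..t}. g s) - (LBINT s:{0..t}. f s)) \<in> o(\<lambda>t. LBINT s:{0..t}. f s)"
  proof (rule landau_o.smallI)
    fix c :: real assume "c > 0"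
    have "(\<lambda>x. g x - f x) \<in> o(f)"
      using asymp_equiv_sym[THEN iffD1, OF \<open>f \<sim>[at_top] g\<close>] unfolding asymp_equiv_altdef .
    from landau_o.smallD[OF this, of "c/2"] \<open>c > 0\<close>
    obtain x0 where x0: "\<And>x. x0 \<le> x \<Longrightarrow> \<bar>g x - f x\<bar> \<le> c/2 * \<bar>f x\<bar>"
      by (auto simp: eventually_at_top_linorder)
    define C where "C = (LBINT s:{0..x0}. \<bar>g s - f s\<bar>)"
    have "eventually (\<lambda>t. 2 * C / c \<le> (LBINT s:{0..t}. f s)) at_top"
      using diverges by (simp add: filterlim_at_top)
    then show "eventually (\<lambda>t. norm ((LBINT s:{0..t}. g s) - (LBINT s:{0..t}. f s))
                 \<le> c * norm (LBINT s:{0..t}. f s)) at_top"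
    proof eventually_elim
      case (elim t)
      have "\<bar>(LBINT s:{0..t}. g s) - (LBINT s:{0..t}. f s)\<bar> \<le> C + c/2 * (LBINT s:{0..t}. f s)"
        unfolding C_def using \<open>c > 0\<close>
        by (intro abs_set_integral_diff_le f_nonneg f_int g_int x0) auto
      moreover have "2 * C \<le> c * (LBINT s:{0..t}. f s)"
        using elim \<open>c > 0\<close> by (simp add: field_simps)
      moreover have "c * (LBINT s:{0..t}. f s) \<le> c * \<bar>LBINT s:{0..t}. f s\<bar>"
        using \<open>c > 0\<close> by (intro mult_left_mono) auto
      ultimately show ?case by simp
    qed
  qed
  then show ?thesis
    by (rule asymp_equiv_symI[OF smallo_imp_asymp_equiv])
qed

lemma asymp_equiv_tail_integral:
  fixes f g :: "real \<Rightarrow> real"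
  assumes g_nonneg: "\<And>s. 0 \<le> s \<Longrightarrow> 0 \<le> g s"
    and f_int: "set_integrable lborel {0..} f" and g_int: "set_integrable lborel {0..} g"
    and "f \<sim>[at_top] g"
  shows "(\<lambda>t. LBINT s:{t<..}. f s) \<sim>[at_top] (\<lambda>t. LBINT s:{t<..}. g s)"
  unfolding asymp_equiv_altdef
proof (rule landau_o.smallI)
  fix c :: real assume c: "c > 0"
  have "(\<lambda>x. f x - g x) \<in> o(g)" using \<open>f \<sim>[at_top] g\<close> unfolding asymp_equiv_altdef .
  from landau_o.smallD[OF this c]
  obtain x0 where x0: "\<And>x. x0 \<le> x \<Longrightarrow> \<bar>f x - g x\<bar> \<le> c * \<bar>g x\<bar>"
    by (auto simp: eventually_at_top_linorder)
  show "eventually (\<lambda>t. norm ((LBINT s:{t<..}. f s) - (LBINT s:{t<..}. g s))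
          \<le> c * norm (LBINT s:{t<..}. g s)) at_top"
    using eventually_ge_at_top[of "max x0 0"]
  proof eventually_elim
    case (elim t)
    have f_int': "set_integrable lborel {t<..} f" and g_int': "set_integrable lborel {t<..} g"
      using elim by (auto intro: set_integrable_subset[OF f_int] set_integrable_subset[OF g_int])
    have diff_int: "set_integrable lborel {t<..} (\<lambda>s. f s - g s)"
      using f_int' g_int' by (rule set_integral_diff(1))
    have pointwise: "\<bar>f s - g s\<bar> \<le> c * g s" if "s \<in> {t<..}" for s
      using x0[of s] g_nonneg[of s] elim that by auto
    have "\<bar>(LBINT s:{t<..}. f s) - (LBINT s:{t<..}. g s)\<bar> = \<bar>LBINT s:{t<..}. f s - g s\<bar>"
      using f_int' g_int' by (simp add: set_integral_diff)
    also have "\<dots> \<le> (LBINT s:{t<..}. \<bar>f s - g s\<bar>)"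
      using set_integral_norm_bound[OF diff_int] by simp
    also have "\<dots> \<le> (LBINT s:{t<..}. c * g s)"
      using pointwise by (intro set_integral_mono set_integrable_abs diff_int set_integrable_mult_right g_int')
    also have "\<dots> \<le> c * \<bar>LBINT s:{t<..}. g s\<bar>"
      using c by (simp add: mult_left_mono)
    finally show ?case by simp
  qed
qed

lemma mono_set_integral_Icc:
  fixes f :: "real \<Rightarrow> real"
  assumes "\<And>x. set_integrable lborel {0..x} f" and "\<And>u. 0 \<le> u \<Longrightarrow> 0 \<le> f u"
  shows "mono (\<lambda>s. LBINT u:{0..s}. f u)"
proof (rule monoI)
  fix s s' :: real assume "s \<le> s'"
  then show "(LBINT u:{0..s}. f u) \<le> (LBINT u:{0..s'}. f u)"
    unfolding set_lebesgue_integral_def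
    using assms(1)[of s] assms(1)[of s'] assms(2) unfolding set_integrable_def
    by (intro integral_mono) (auto simp: indicator_def)
qed

lemma set_integral_Icc_nonneg:
  fixes f :: "real \<Rightarrow> real"
  assumes "\<And>u. 0 \<le> u \<Longrightarrow> 0 \<le> f u"
  shows "0 \<le> (LBINT u:{0..s}. f u)"
  unfolding set_lebesgue_integral_def using assms
  by (intro integral_nonneg_AE) (auto simp: indicator_def)

section \<open>The mean square displacement kernel\<close>

text \<open>These are \<open>G\<close>, \<open>W\<close>, \<open>2s G(s) + W(s)\<close> and its integral from the sketch above.\<close>

definition integrated_tail :: "(real \<Rightarrow> real) \<Rightarrow> real \<Rightarrow> real" where
  "integrated_tail F s = mean_time F - (LBINT u:{0..s}. 1 - F u)"

definition truncated_second_moment :: "(real \<Rightarrow> real) \<Rightarrow> real \<Rightarrow> real" where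
  "truncated_second_moment F s = (LBINT u:{0..s}. 2 * u * (1 - F u))"

definition msd_kernel :: "(real \<Rightarrow> real) \<Rightarrow> real \<Rightarrow> real" where
  "msd_kernel F s = 2 * s * integrated_tail F s + truncated_second_moment F s"

definition msd_kernel_integral :: "(real \<Rightarrow> real) \<Rightarrow> real \<Rightarrow> real" where
  "msd_kernel_integral F t = (LBINT s:{0..t}. msd_kernel F s)"

locale finite_mean_cdf =
  fixes F :: "real \<Rightarrow> real"
  assumes F_measurable [measurable]: "F \<in> borel_measurable borel"
    and F_le_1: "\<And>s. F s \<le> 1"
    and tail_integrable: "set_integrable lborel {0..} (\<lambda>s. 1 - F s)"
begin

lemma tail_integrable_Icc: "set_integrable lborel {0..x} (\<lambda>s. 1 - F s)"
  by (rule set_integrable_subset[OF tail_integrable]) auto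

lemma second_moment_integrable_Icc: "set_integrable lborel {0..x} (\<lambda>u. 2 * u * (1 - F u))"
proof (rule set_integrable_bound)
  show "set_integrable lborel {0..x} (\<lambda>u. 2 * x * (1 - F u))"
    by (intro set_integrable_mult_right tail_integrable_Icc)
  show "AE u in lborel. u \<in> {0..x} \<longrightarrow> norm (2 * u * (1 - F u)) \<le> norm (2 * x * (1 - F u))"
    using F_le_1 by (intro AE_I2) (auto intro!: mult_right_mono)
qed (simp add: set_borel_measurable_def)

lemma mean_time_nonneg: "0 \<le> mean_time F"
  unfolding mean_time_def set_lebesgue_integral_def using F_le_1
  by (intro integral_nonneg_AE) (auto simp: indicator_def)

lemma integrated_tail_eq:
  assumes "0 \<le> s"
  shows "integrated_tail F s = (LBINT u:{s<..}. 1 - F u)"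
proof -
  have "mean_time F = (LBINT u:({0..s} \<union> {s<..}). 1 - F u)"
    unfolding mean_time_def using assms by (simp add: ivl_disj_un)
  also have "\<dots> = (LBINT u:{0..s}. 1 - F u) + (LBINT u:{s<..}. 1 - F u)"
    using assms by (intro set_integral_Un set_integrable_subset[OF tail_integrable]) auto
  finally show ?thesis unfolding integrated_tail_def by simp
qed

lemma integrated_tail_nonneg: "0 \<le> s \<Longrightarrow> 0 \<le> integrated_tail F s"
  unfolding integrated_tail_eq set_lebesgue_integral_def using F_le_1
  by (intro integral_nonneg_AE) (auto simp: indicator_def)

lemma integrated_tail_le_mean_time: "integrated_tail F s \<le> mean_time F"
  unfolding integrated_tail_def using F_le_1 set_integral_Icc_nonneg[of "\<lambda>u. 1 - F u"] by simp

lemma integrated_tail_measurable [measurable]: "integrated_tail F \<in> borel_measurable borel"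
proof -
  have "mono (\<lambda>s. LBINT u:{0..s}. 1 - F u)"
    using F_le_1 by (intro mono_set_integral_Icc tail_integrable_Icc) simp
  then have [measurable]: "(\<lambda>s. LBINT u:{0..s}. 1 - F u) \<in> borel_measurable borel"
    by (rule borel_measurable_mono)
  show ?thesis unfolding integrated_tail_def[abs_def] by measurable
qed

lemma truncated_second_moment_mono: "mono (truncated_second_moment F)"
  unfolding truncated_second_moment_def[abs_def]
  using F_le_1 by (intro mono_set_integral_Icc second_moment_integrable_Icc) simp

lemma truncated_second_moment_nonneg: "0 \<le> truncated_second_moment F s"
  unfolding truncated_second_moment_def using F_le_1 by (intro set_integral_Icc_nonneg) simp

lemma truncated_second_moment_nonpos:
  assumes "r \<le> 0"
  shows "truncated_second_moment F r = 0"
proof -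
  have "(\<lambda>u. indicator {0..r} u * (2 * u * (1 - F u))) = (\<lambda>u. 0)"
    using assms by (auto simp: indicator_def)
  then show ?thesis
    by (simp add: truncated_second_moment_def set_lebesgue_integral_def)
qed

lemma ennreal_truncated_second_moment:
  "ennreal (truncated_second_moment F x)
     = (\<integral>\<^sup>+ u. ennreal (2 * u * (1 - F u)) * indicator {0..x} u \<partial>lborel)"
proof -
  have "(\<integral>\<^sup>+ u. ennreal (2 * u * (1 - F u)) * indicator {0..x} u \<partial>lborel)
          = (\<integral>\<^sup>+ u. ennreal (indicator {0..x} u * (2 * u * (1 - F u))) \<partial>lborel)"
    by (intro nn_integral_cong) (auto simp: indicator_def)
  also have "\<dots> = ennreal (truncated_second_moment F x)"
    unfolding truncated_second_moment_def set_lebesgue_integral_def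
    using second_moment_integrable_Icc F_le_1 unfolding set_integrable_def
    by (subst nn_integral_eq_integral) (auto simp: indicator_def)
  finally show ?thesis ..
qed

lemma msd_kernel_measurable [measurable]: "msd_kernel F \<in> borel_measurable borel"
  using borel_measurable_mono[OF truncated_second_moment_mono]
  unfolding msd_kernel_def[abs_def] by measurable

lemma msd_kernel_nonneg: "0 \<le> s \<Longrightarrow> 0 \<le> msd_kernel F s"
  unfolding msd_kernel_def using integrated_tail_nonneg[of s] truncated_second_moment_nonneg[of s]
  by simp

lemma msd_kernel_integrable: "set_integrable lborel {0..t} (msd_kernel F)"
  unfolding set_integrable_def
proof (rule integrableI_bounded_set_indicator)
  show "AE x\<in>{0..t} in lborel. norm (msd_kernel F x)
          \<le> 2 * \<bar>t\<bar> * mean_time F + truncated_second_moment F t"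
  proof (intro AE_I2 impI)
    fix x assume x: "x \<in> {0..t}"
    have "x * integrated_tail F x \<le> \<bar>t\<bar> * mean_time F"
      using x integrated_tail_le_mean_time[of x] integrated_tail_nonneg[of x]
      by (intro mult_mono) auto
    moreover have "truncated_second_moment F x \<le> truncated_second_moment F t"
      using truncated_second_moment_mono x by (auto simp: mono_def)
    ultimately show "norm (msd_kernel F x) \<le> 2 * \<bar>t\<bar> * mean_time F + truncated_second_moment F t"
      using msd_kernel_nonneg[of x] x unfolding msd_kernel_def by simp
  qed
qed (auto simp: emeasure_lborel_Icc_eq)

lemma msd_kernel_integral_nonneg: "0 \<le> msd_kernel_integral F t"
  unfolding msd_kernel_integral_def by (intro set_integral_Icc_nonneg msd_kernel_nonneg)

context
  assumes infinite_variance: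
    "nn_integral lborel (\<lambda>s. ennreal (2 * s * (1 - F s)) * indicator {0..} s) = \<infinity>"
begin

lemma truncated_second_moment_tendsto_at_top:
  "filterlim (truncated_second_moment F) at_top at_top"
proof -
  let ?f = "\<lambda>n u. ennreal (2 * u * (1 - F u)) * indicator {0..real n} u"
  have "(\<lambda>n. integral\<^sup>N lborel (?f n))
          \<longlonglongrightarrow> (\<integral>\<^sup>+ u. ennreal (2 * u * (1 - F u)) * indicator {0..} u \<partial>lborel)"
  proof (rule nn_integral_LIMSEQ)
    show "incseq ?f"
      by (auto simp: incseq_def le_fun_def indicator_def intro!: mult_right_mono)
    fix u :: real
    have "eventually (\<lambda>n. ?f n u = ennreal (2 * u * (1 - F u)) * indicator {0..} u) sequentially"
      using eventually_ge_at_top[of "nat \<lceil>u\<rceil>"]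
      by eventually_elim (auto simp: indicator_def nat_le_iff ceiling_le_iff)
    then show "(\<lambda>n. ?f n u) \<longlonglongrightarrow> ennreal (2 * u * (1 - F u)) * indicator {0..} u"
      by (rule tendsto_eventually)
  qed simp
  moreover have "integral\<^sup>N lborel (?f n) = ennreal (truncated_second_moment F (real n))" for n
    by (simp add: ennreal_truncated_second_moment)
  ultimately have "filterlim (\<lambda>n. truncated_second_moment F (real n)) at_top sequentially"
    using infinite_variance by (simp flip: ennreal_tendsto_top_eq_at_top)
  show ?thesis
    unfolding filterlim_at_top
  proof
    fix B
    obtain n :: nat where n: "B \<le> truncated_second_moment F (real n)"
      using \<open>filterlim (\<lambda>n. truncated_second_moment F (real n)) at_top sequentially\<close>
      by (auto simp: filterlim_at_top dest!: spec[of _ B] eventually_happens)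
    show "eventually (\<lambda>x. B \<le> truncated_second_moment F x) at_top"
      using eventually_ge_at_top[of "real n"]
      by eventually_elim (rule order_trans[OF n monoD[OF truncated_second_moment_mono]])
  qed
qed

lemma msd_kernel_integral_tendsto_at_top: "filterlim (msd_kernel_integral F) at_top at_top"
proof -
  obtain y where y: "\<And>s. y \<le> s \<Longrightarrow> 1 \<le> truncated_second_moment F s" "0 \<le> y"
    using truncated_second_moment_tendsto_at_top
    unfolding filterlim_at_top eventually_at_top_linorder
    by (metis linorder_linear order.trans spec)
  have "t - y \<le> msd_kernel_integral F t" if "y \<le> t" for t
  proof -
    have "t - y = (LBINT s:{0..t}. indicator {y..} s)"
      using that y(2) by (simp add: set_lebesgue_integral_def indicator_inter_arith[symmetric]
          Int_atLeastAtMostR1 max_absorb1)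
    also have "\<dots> \<le> msd_kernel_integral F t"
      unfolding msd_kernel_integral_def
    proof (rule set_integral_mono)
      show "set_integrable lborel {0..t} (\<lambda>s. indicator {y..} s :: real)"
        unfolding set_integrable_def
        by (rule integrableI_bounded_set_indicator[where B=1]) (auto simp: emeasure_lborel_Icc_eq)
      fix s assume s: "s \<in> {0..t}"
      have "0 \<le> 2 * s * integrated_tail F s"
        using s integrated_tail_nonneg[of s] by simp
      then show "indicator {y..} s \<le> msd_kernel F s"
        using y(1)[of s] s msd_kernel_nonneg[of s] by (auto simp: indicator_def msd_kernel_def)
    qed (rule msd_kernel_integrable)
    finally show ?thesis .
  qed
  then have "eventually (\<lambda>t. -y + t \<le> msd_kernel_integral F t) at_top"
    unfolding eventually_at_top_linorder by auto
  then show ?thesis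
    by (rule filterlim_at_top_mono[OF filterlim_tendsto_add_at_top[OF tendsto_const filterlim_ident]])
qed

end

end

lemma msd_kernel_integral_asymp_equiv:
  assumes "finite_mean_cdf F" "finite_mean_cdf F'"
    and infinite_variance: "nn_integral lborel (\<lambda>s. ennreal (2 * s * (1 - F s)) * indicator {0..} s) = \<infinity>"
    and tails: "(\<lambda>t. 1 - F t) \<sim>[at_top] (\<lambda>t. 1 - F' t)"
  shows "msd_kernel_integral F \<sim>[at_top] msd_kernel_integral F'"
proof -
  interpret F: finite_mean_cdf F by fact
  interpret F': finite_mean_cdf F' by fact
  have "(\<lambda>t. LBINT s:{t<..}. 1 - F s) \<sim>[at_top] (\<lambda>t. LBINT s:{t<..}. 1 - F' s)"
    using F'.F_le_1 by (intro asymp_equiv_tail_integral F.tail_integrable F'.tail_integrable tails) simp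
  moreover have "eventually (\<lambda>t. integrated_tail F t = (LBINT s:{t<..}. 1 - F s)) at_top"
    and "eventually (\<lambda>t. integrated_tail F' t = (LBINT s:{t<..}. 1 - F' s)) at_top"
    by (auto simp: eventually_at_top_linorder F.integrated_tail_eq F'.integrated_tail_eq
        intro!: exI[of _ 0])
  ultimately have "integrated_tail F \<sim>[at_top] integrated_tail F'"
    using asymp_equiv_cong by fastforce
  then have tail_term: "(\<lambda>s. 2 * s * integrated_tail F s) \<sim>[at_top] (\<lambda>s. 2 * s * integrated_tail F' s)"
    by (intro asymp_equiv_mult asymp_equiv_refl)
  have "(\<lambda>u. 2 * u * (1 - F u)) \<sim>[at_top] (\<lambda>u. 2 * u * (1 - F' u))"
    using asymp_equiv_mult[OF asymp_equiv_refl[of "\<lambda>u. 2 * u"] tails] by (simp add: mult.assoc)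
  then have moment_term: "truncated_second_moment F \<sim>[at_top] truncated_second_moment F'"
    using F.truncated_second_moment_tendsto_at_top[OF infinite_variance] F.F_le_1
    unfolding truncated_second_moment_def[abs_def]
    by (intro asymp_equiv_set_integral_at_top F.second_moment_integrable_Icc
        F'.second_moment_integrable_Icc) auto
  have "eventually (\<lambda>s. 0 \<le> 2 * s * integrated_tail F' s \<and> 0 \<le> truncated_second_moment F' s) at_top"
    using eventually_ge_at_top[of 0]
    by eventually_elim (simp add: F'.integrated_tail_nonneg F'.truncated_second_moment_nonneg)
  then have "msd_kernel F \<sim>[at_top] msd_kernel F'"
    unfolding msd_kernel_def[abs_def] by (rule asymp_equiv_add_nonneg[OF tail_term moment_term])
  then show ?thesis
    using F.msd_kernel_integral_tendsto_at_top[OF infinite_variance]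
    unfolding msd_kernel_integral_def[abs_def]
    by (intro asymp_equiv_set_integral_at_top F.msd_kernel_nonneg F.msd_kernel_integrable
        F'.msd_kernel_integrable) auto
qed

section \<open>Equilibrium renewal processes\<close>

lemma (in prob_space) nn_integral_lborel_swap:
  assumes "(\<lambda>(s, \<omega>). f s \<omega>) \<in> borel_measurable (lborel \<Otimes>\<^sub>M M)"
  shows "(\<integral>\<^sup>+\<omega>. (\<integral>\<^sup>+s. f s \<omega> \<partial>lborel) \<partial>M) = (\<integral>\<^sup>+s. (\<integral>\<^sup>+\<omega>. f s \<omega> \<partial>M) \<partial>lborel)"
proof -
  interpret pair_sigma_finite lborel M by unfold_locales
  show ?thesis by (rule Fubini'[OF assms])
qed

lemma nn_integral_two_mult_Ico:
  assumes "0 \<le> a"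
  shows "(\<integral>\<^sup>+ s. ennreal (2 * s) * indicator {0..<a} s \<partial>lborel) = ennreal (a\<^sup>2)"
proof -
  have "(\<integral>\<^sup>+ s. ennreal (2 * s) * indicator {0..<a} s \<partial>lborel)
          = (\<integral>\<^sup>+ s. ennreal (2 * s) * indicator {0..a} s \<partial>lborel)"
    by (intro nn_integral_cong_AE) (use AE_lborel_singleton[of a] in \<open>auto simp: indicator_def\<close>)
  also have "\<dots> = ennreal (a\<^sup>2 - 0\<^sup>2)"
    by (rule nn_integral_FTC_Icc) (auto intro!: derivative_eq_intros simp: assms)
  finally show ?thesis by simp
qed

text \<open>Layer-cake formula:
  \<open>min(X, c)\<^sup>2 = \<integral>\<^sub>0\<^sup>c 2s [s < X] ds\<close>, then Tonelli.\<close>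

lemma (in prob_space) nn_integral_min_square:
  assumes X [measurable]: "X \<in> borel_measurable M" and X_nonneg: "AE \<omega> in M. 0 \<le> X \<omega>"
    and "0 \<le> c"
  shows "(\<integral>\<^sup>+\<omega>. ennreal ((min (X \<omega>) c)\<^sup>2) \<partial>M)
       = (\<integral>\<^sup>+ s. ennreal (2 * s) * indicator {0..<c} s * ennreal (prob {\<omega> \<in> space M. s < X \<omega>}) \<partial>lborel)"
proof -
  have "(\<integral>\<^sup>+\<omega>. ennreal ((min (X \<omega>) c)\<^sup>2) \<partial>M)
      = (\<integral>\<^sup>+\<omega>. (\<integral>\<^sup>+s. ennreal (2 * s) * indicator {0..<c} s * indicator {s. s < X \<omega>} s \<partial>lborel) \<partial>M)"
    using X_nonneg
  proof (intro nn_integral_cong_AE, eventually_elim)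
    case (elim \<omega>)
    have "(\<integral>\<^sup>+s. ennreal (2 * s) * indicator {0..<c} s * indicator {s. s < X \<omega>} s \<partial>lborel)
        = (\<integral>\<^sup>+s. ennreal (2 * s) * indicator {0..<min (X \<omega>) c} s \<partial>lborel)"
      by (intro nn_integral_cong) (auto simp: indicator_def)
    also have "\<dots> = ennreal ((min (X \<omega>) c)\<^sup>2)"
      using elim \<open>0 \<le> c\<close> by (intro nn_integral_two_mult_Ico) auto
    finally show ?case by simp
  qed
  also have "\<dots> = (\<integral>\<^sup>+s. (\<integral>\<^sup>+\<omega>. ennreal (2 * s) * indicator {0..<c} s * indicator {s. s < X \<omega>} s \<partial>M) \<partial>lborel)"
    by (rule nn_integral_lborel_swap) measurable
  also have "\<dots> = (\<integral>\<^sup>+ s. ennreal (2 * s) * indicator {0..<c} s * ennreal (prob {\<omega> \<in> space M. s < X \<omega>}) \<partial>lborel)"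
  proof (intro nn_integral_cong)
    fix s :: real
    have "(\<integral>\<^sup>+\<omega>. ennreal (2 * s) * indicator {0..<c} s * indicator {s. s < X \<omega>} s \<partial>M)
        = (\<integral>\<^sup>+\<omega>. ennreal (2 * s) * indicator {0..<c} s * indicator {\<omega> \<in> space M. s < X \<omega>} \<omega> \<partial>M)"
      by (intro nn_integral_cong) (auto simp: indicator_def)
    then show "(\<integral>\<^sup>+\<omega>. ennreal (2 * s) * indicator {0..<c} s * indicator {s. s < X \<omega>} s \<partial>M)
        = ennreal (2 * s) * indicator {0..<c} s * ennreal (prob {\<omega> \<in> space M. s < X \<omega>})"
      by (simp add: nn_integral_cmult_indicator emeasure_eq_measure)
  qed
  finally show ?thesis .
qed

lemma (in prob_space) indep_var_nn_integral:
  assumes "indep_var borel X borel Y"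
    and h [measurable]: "(\<lambda>(x, y). h x y) \<in> borel_measurable (borel \<Otimes>\<^sub>M borel)"
  shows "(\<integral>\<^sup>+\<omega>. h (X \<omega>) (Y \<omega>) \<partial>M) = (\<integral>\<^sup>+\<omega>. (\<integral>\<^sup>+\<omega>'. h (X \<omega>) (Y \<omega>') \<partial>M) \<partial>M)"
proof -
  have [measurable]: "X \<in> borel_measurable M" "Y \<in> borel_measurable M"
    and joint: "distr M borel X \<Otimes>\<^sub>M distr M borel Y = distr M (borel \<Otimes>\<^sub>M borel) (\<lambda>x. (X x, Y x))"
    using assms(1) unfolding indep_var_distribution_eq by auto
  interpret Y: prob_space "distr M borel Y" by (rule prob_space_distr) simp
  have "(\<integral>\<^sup>+\<omega>. h (X \<omega>) (Y \<omega>) \<partial>M)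
          = (\<integral>\<^sup>+p. (\<lambda>(x, y). h x y) p \<partial>distr M (borel \<Otimes>\<^sub>M borel) (\<lambda>x. (X x, Y x)))"
    by (subst nn_integral_distr) auto
  also have "\<dots> = (\<integral>\<^sup>+x. (\<integral>\<^sup>+y. h x y \<partial>distr M borel Y) \<partial>distr M borel X)"
    unfolding joint[symmetric] by (subst Y.nn_integral_fst[symmetric]) auto
  also have "\<dots> = (\<integral>\<^sup>+\<omega>. (\<integral>\<^sup>+y. h (X \<omega>) y \<partial>distr M borel Y) \<partial>M)"
    using Y.borel_measurable_nn_integral_fst[of "\<lambda>(x, y). h x y"]
    by (subst nn_integral_distr) auto
  also have "\<dots> = (\<integral>\<^sup>+\<omega>. (\<integral>\<^sup>+\<omega>'. h (X \<omega>) (Y \<omega>') \<partial>M) \<partial>M)"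
    by (intro nn_integral_cong) (subst nn_integral_distr, auto)
  finally show ?thesis .
qed

definition integral_upto :: "(real \<Rightarrow> ennreal) \<Rightarrow> real \<Rightarrow> ennreal" where
  "integral_upto k z = (\<integral>\<^sup>+r. k r * indicator {..z} r \<partial>lborel)"

lemma integral_upto_mono: "x \<le> y \<Longrightarrow> integral_upto k x \<le> integral_upto k y"
  unfolding integral_upto_def by (intro nn_integral_mono) (auto simp: indicator_def)

lemma integral_upto_measurable [measurable]:
  assumes [measurable]: "k \<in> borel_measurable borel"
  shows "integral_upto k \<in> borel_measurable borel"
proof -
  have "(\<lambda>z. \<integral>\<^sup>+r. (\<lambda>(z, r). k r * (if r \<le> z then 1 else 0)) (z, r) \<partial>lborel) \<in> borel_measurable borel"
    by (rule lborel.borel_measurable_nn_integral_fst) measurable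
  moreover have "integral_upto k = (\<lambda>z. \<integral>\<^sup>+r. k r * (if r \<le> z then 1 else 0) \<partial>lborel)"
    unfolding integral_upto_def by (intro ext nn_integral_cong) (auto simp: indicator_def)
  ultimately show ?thesis by simp
qed

locale equilibrium_renewal = prob_space M for M :: "'a measure" +
  fixes F :: "real \<Rightarrow> real" and S :: "nat \<Rightarrow> 'a \<Rightarrow> real"
  assumes F_zero: "F 0 = 0"
    and mean_finite: "set_integrable lborel {0..} (\<lambda>s. 1 - F s)"
    and indep_S: "indep_vars (\<lambda>_. borel) S UNIV"
    and cdf_S_Suc: "\<And>k t. measure M {\<omega> \<in> space M. S (Suc k) \<omega> \<le> t} = F t"
    and cdf_S_0: "\<And>t. measure M {\<omega> \<in> space M. S 0 \<omega> \<le> t} = (LBINT s:{0..t}. 1 - F s) / mean_time F"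
begin

abbreviation epoch :: "nat \<Rightarrow> 'a \<Rightarrow> real" where
  "epoch \<equiv> renewal_epoch S"

lemma S_measurable [measurable]: "S k \<in> borel_measurable M"
  using indep_S unfolding indep_vars_def by auto

lemma epoch_measurable [measurable]: "epoch n \<in> borel_measurable M"
  unfolding renewal_epoch_def[abs_def] by measurable

lemma F_eq_prob: "F x = prob {\<omega> \<in> space M. S (Suc 0) \<omega> \<le> x}"
  using cdf_S_Suc[of 0 x] by simp

lemma F_nonneg: "0 \<le> F x"
  unfolding F_eq_prob by simp

lemma F_mono: "x \<le> y \<Longrightarrow> F x \<le> F y"
  unfolding F_eq_prob by (intro finite_measure_mono) auto

lemma F_nonpos: "x \<le> 0 \<Longrightarrow> F x = 0"
  using F_mono[of x 0] F_nonneg[of x] F_zero by simp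

sublocale finite_mean_cdf F
proof
  show "F \<in> borel_measurable borel"
    using F_mono by (intro borel_measurable_mono) (simp add: mono_def)
  show "F s \<le> 1" for s
    unfolding F_eq_prob by simp
qed (rule mean_finite)

lemma mean_time_pos: "0 < mean_time F"
proof (rule ccontr)
  assume "\<not> 0 < mean_time F"
  then have "mean_time F = 0" using mean_time_nonneg by simp
  then have "prob (\<Union>n. {\<omega> \<in> space M. S 0 \<omega> \<le> real n}) = 0"
    by (intro measure_countably_zero) (auto simp: cdf_S_0)
  moreover have "(\<Union>n. {\<omega> \<in> space M. S 0 \<omega> \<le> real n}) = space M"
    using real_arch_simple by auto
  ultimately show False using prob_space by simp
qed

lemma S_pos_AE: "AE \<omega> in M. 0 < S k \<omega>"
proof -
  have "prob {\<omega> \<in> space M. S k \<omega> \<le> 0} = 0"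
  proof (cases k)
    case 0
    have "(LBINT s:{0}. 1 - F s) = 0"
      using tail_integrable_Icc[of 0] by (subst set_integral_at_point) auto
    then have "(LBINT s:{0..0}. 1 - F s) = 0" by simp
    then show ?thesis using 0 cdf_S_0[of 0] by simp
  next
    case (Suc j)
    then show ?thesis using cdf_S_Suc[of j 0] F_zero by simp
  qed
  then show ?thesis
    by (subst AE_iff_measurable[where N="{\<omega> \<in> space M. S k \<omega> \<le> 0}"])
       (auto simp: not_less emeasure_eq_measure)
qed

lemma S_pos_all_AE: "AE \<omega> in M. \<forall>k. 0 < S k \<omega>"
  using S_pos_AE by (simp add: AE_all_countable)

lemma epoch_mono:
  assumes "\<forall>k. 0 < S k \<omega>" and "m \<le> n"
  shows "epoch m \<omega> \<le> epoch n \<omega>"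
proof (rule lift_Suc_mono_le[of "\<lambda>n. epoch n \<omega>", OF _ assms(2)])
  show "epoch i \<omega> \<le> epoch (Suc i) \<omega>" for i
    using assms(1)[rule_format, of "Suc i"] by (simp add: renewal_epoch_def)
qed

lemma epoch_nonneg: "\<forall>k. 0 < S k \<omega> \<Longrightarrow> 0 \<le> epoch n \<omega>"
  unfolding renewal_epoch_def by (intro sum_nonneg) (auto intro: less_imp_le)

definition delay_density :: "real \<Rightarrow> ennreal" where
  "delay_density s = ennreal (indicator {0..} s * (1 - F s) / mean_time F)"

lemma delay_density_measurable [measurable]: "delay_density \<in> borel_measurable borel"
  unfolding delay_density_def by measurable

lemma nn_integral_delay_density:
  assumes "A \<in> sets borel"
  shows "(\<integral>\<^sup>+ s. delay_density s * indicator A s \<partial>lborel)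
           = ennreal ((LBINT s:({0..} \<inter> A). 1 - F s) / mean_time F)"
proof -
  have "set_integrable lborel ({0..} \<inter> A) (\<lambda>s. 1 - F s)"
    by (rule set_integrable_subset[OF tail_integrable]) (use assms in auto)
  moreover have "(\<integral>\<^sup>+ s. delay_density s * indicator A s \<partial>lborel)
      = (\<integral>\<^sup>+ s. ennreal (indicator ({0..} \<inter> A) s * (1 - F s) / mean_time F) \<partial>lborel)"
    unfolding delay_density_def by (intro nn_integral_cong) (auto simp: indicator_def)
  ultimately show ?thesis
    using F_le_1 mean_time_nonneg unfolding set_integrable_def set_lebesgue_integral_def
    by (subst (asm) nn_integral_eq_integral) (auto simp: indicator_def)
qed

lemma distr_S_0: "distr M borel (S 0) = density lborel delay_density"
proof (rule cdf_unique)
  show "real_distribution (distr M borel (S 0))" by (rule real_distribution_distr) simp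
  have "emeasure (density lborel delay_density) UNIV = 1"
    using nn_integral_delay_density[of UNIV] mean_time_pos
    by (simp add: emeasure_density mean_time_def)
  then show "real_distribution (density lborel delay_density)"
    by (auto intro: prob_spaceI simp: real_distribution_def real_distribution_axioms_def)
  show "cdf (distr M borel (S 0)) = cdf (density lborel delay_density)"
  proof
    fix x
    have "emeasure (density lborel delay_density) {..x}
            = ennreal ((LBINT s:{0..x}. 1 - F s) / mean_time F)"
      using nn_integral_delay_density[of "{..x}"] atLeastAtMost_def[of 0 x]
      by (simp add: emeasure_density nn_integral_set_ennreal mult.commute)
    moreover have "0 \<le> (LBINT s:{0..x}. 1 - F s) / mean_time F"
      using mean_time_nonneg F_le_1 by (intro divide_nonneg_nonneg set_integral_Icc_nonneg) auto
    ultimately show "cdf (distr M borel (S 0)) x = cdf (density lborel delay_density) x"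
      unfolding cdf_def measure_def using cdf_S_0[of x]
      by (subst emeasure_distr) (auto simp: emeasure_eq_measure vimage_def Int_def conj_commute)
  qed
qed

lemma nn_integral_S_0:
  assumes [measurable]: "g \<in> borel_measurable borel"
  shows "(\<integral>\<^sup>+\<omega>. g (S 0 \<omega>) \<partial>M) = (\<integral>\<^sup>+ s. delay_density s * g s \<partial>lborel)"
proof -
  have "(\<integral>\<^sup>+\<omega>. g (S 0 \<omega>) \<partial>M) = (\<integral>\<^sup>+ s. g s \<partial>distr M borel (S 0))"
    by (subst nn_integral_distr) auto
  then show ?thesis
    unfolding distr_S_0 by (subst (asm) nn_integral_density) auto
qed

lemma prob_S_Suc_greater: "prob {\<omega> \<in> space M. s < S (Suc j) \<omega>} = 1 - F s"
proof -
  have "{\<omega> \<in> space M. s < S (Suc j) \<omega>} = space M - {\<omega> \<in> space M. S (Suc j) \<omega> \<le> s}" by auto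
  then show ?thesis using cdf_S_Suc[of j s] by (simp add: prob_compl)
qed

lemma prob_S_0_greater: "prob {\<omega> \<in> space M. s < S 0 \<omega>} = integrated_tail F s / mean_time F"
proof -
  have "{\<omega> \<in> space M. s < S 0 \<omega>} = space M - {\<omega> \<in> space M. S 0 \<omega> \<le> s}" by auto
  then show ?thesis
    using cdf_S_0[of s] mean_time_pos
    by (simp add: prob_compl integrated_tail_def diff_divide_distrib)
qed

lemma nn_integral_min_S_0_square:
  assumes "0 \<le> t"
  shows "ennreal (mean_time F) * (\<integral>\<^sup>+\<omega>. ennreal ((min (S 0 \<omega>) t)\<^sup>2) \<partial>M)
       = (\<integral>\<^sup>+ s. ennreal (2 * s * integrated_tail F s) * indicator {0..<t} s \<partial>lborel)"
proof -
  have "AE \<omega> in M. 0 \<le> S 0 \<omega>" using S_pos_AE[of 0] by eventually_elim auto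
  then have "ennreal (mean_time F) * (\<integral>\<^sup>+\<omega>. ennreal ((min (S 0 \<omega>) t)\<^sup>2) \<partial>M)
      = (\<integral>\<^sup>+ s. ennreal (mean_time F) * (ennreal (2 * s) * indicator {0..<t} s
             * ennreal (integrated_tail F s / mean_time F)) \<partial>lborel)"
    using assms by (simp add: nn_integral_min_square prob_S_0_greater nn_integral_cmult)
  also have "\<dots> = (\<integral>\<^sup>+ s. ennreal (2 * s * integrated_tail F s) * indicator {0..<t} s \<partial>lborel)"
  proof (intro nn_integral_cong)
    fix s
    show "ennreal (mean_time F) * (ennreal (2 * s) * indicator {0..<t} s
            * ennreal (integrated_tail F s / mean_time F))
          = ennreal (2 * s * integrated_tail F s) * indicator {0..<t} s"
      using mean_time_pos integrated_tail_nonneg[of s]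
      by (auto simp: indicator_def ennreal_mult[symmetric])
  qed
  finally show ?thesis .
qed

lemma nn_integral_min_S_Suc_square:
  assumes "0 \<le> c"
  shows "(\<integral>\<^sup>+\<omega>. ennreal ((min (S (Suc j) \<omega>) c)\<^sup>2) \<partial>M) = ennreal (truncated_second_moment F c)"
proof -
  have "AE \<omega> in M. 0 \<le> S (Suc j) \<omega>" using S_pos_AE[of "Suc j"] by eventually_elim auto
  then have "(\<integral>\<^sup>+\<omega>. ennreal ((min (S (Suc j) \<omega>) c)\<^sup>2) \<partial>M)
      = (\<integral>\<^sup>+ s. ennreal (2 * s) * indicator {0..<c} s * ennreal (1 - F s) \<partial>lborel)"
    using assms by (simp add: nn_integral_min_square prob_S_Suc_greater)
  also have "\<dots> = (\<integral>\<^sup>+ s. ennreal (2 * s * (1 - F s)) * indicator {0..c} s \<partial>lborel)"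
    using F_le_1 AE_lborel_singleton[of c]
    by (intro nn_integral_cong_AE) (auto simp: indicator_def ennreal_mult[symmetric])
  finally show ?thesis
    by (simp add: ennreal_truncated_second_moment)
qed

lemma nn_integral_integral_upto_S_Suc:
  assumes [measurable]: "k \<in> borel_measurable borel"
  shows "(\<integral>\<^sup>+\<omega>. integral_upto k (z - S (Suc j) \<omega>) \<partial>M) = (\<integral>\<^sup>+ r. k r * ennreal (F (z - r)) \<partial>lborel)"
proof -
  have "(\<integral>\<^sup>+\<omega>. integral_upto k (z - S (Suc j) \<omega>) \<partial>M)
      = (\<integral>\<^sup>+\<omega>. (\<integral>\<^sup>+r. k r * indicator {r. S (Suc j) \<omega> \<le> z - r} r \<partial>lborel) \<partial>M)"
    unfolding integral_upto_def by (intro nn_integral_cong) (auto simp: indicator_def)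
  also have "\<dots> = (\<integral>\<^sup>+r. (\<integral>\<^sup>+\<omega>. k r * indicator {r. S (Suc j) \<omega> \<le> z - r} r \<partial>M) \<partial>lborel)"
    by (rule nn_integral_lborel_swap) measurable
  also have "\<dots> = (\<integral>\<^sup>+ r. k r * ennreal (F (z - r)) \<partial>lborel)"
  proof (intro nn_integral_cong)
    fix r :: real
    have "(\<integral>\<^sup>+\<omega>. k r * indicator {r. S (Suc j) \<omega> \<le> z - r} r \<partial>M)
        = (\<integral>\<^sup>+\<omega>. k r * indicator {\<omega> \<in> space M. S (Suc j) \<omega> \<le> z - r} \<omega> \<partial>M)"
      by (intro nn_integral_cong) (auto simp: indicator_def)
    then show "(\<integral>\<^sup>+\<omega>. k r * indicator {r. S (Suc j) \<omega> \<le> z - r} r \<partial>M) = k r * ennreal (F (z - r))"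
      by (simp add: nn_integral_cmult_indicator emeasure_eq_measure cdf_S_Suc)
  qed
  finally show ?thesis .
qed

lemma mean_time_nn_integral_S_0:
  assumes [measurable]: "k \<in> borel_measurable borel"
  shows "ennreal (mean_time F) * (\<integral>\<^sup>+\<omega>. k (z - S 0 \<omega>) \<partial>M)
       = (\<integral>\<^sup>+ r. k r * ennreal (indicator {0..} (z - r) * (1 - F (z - r))) \<partial>lborel)"
proof -
  have "(\<integral>\<^sup>+\<omega>. k (z - S 0 \<omega>) \<partial>M) = (\<integral>\<^sup>+ s. delay_density s * k (z - s) \<partial>lborel)"
    by (rule nn_integral_S_0) measurable
  also have "\<dots> = (\<integral>\<^sup>+ r. delay_density (z + (-1) * r) * k (z - (z + (-1) * r)) \<partial>lborel)"
    by (subst nn_integral_real_affine[where c="-1" and t=z]) auto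
  finally have "ennreal (mean_time F) * (\<integral>\<^sup>+\<omega>. k (z - S 0 \<omega>) \<partial>M)
      = (\<integral>\<^sup>+ r. ennreal (mean_time F) * (delay_density (z - r) * k r) \<partial>lborel)"
    by (simp add: nn_integral_cmult)
  also have "\<dots> = (\<integral>\<^sup>+ r. k r * ennreal (indicator {0..} (z - r) * (1 - F (z - r))) \<partial>lborel)"
  proof (intro nn_integral_cong)
    fix r
    have "ennreal (mean_time F) * delay_density (z - r) = ennreal (indicator {0..} (z - r) * (1 - F (z - r)))"
      unfolding delay_density_def using mean_time_pos F_le_1
      by (subst ennreal_mult[symmetric]) (auto simp: indicator_def)
    then show "ennreal (mean_time F) * (delay_density (z - r) * k r)
        = k r * ennreal (indicator {0..} (z - r) * (1 - F (z - r)))"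
      by (metis mult.assoc mult.commute)
  qed
  finally show ?thesis .
qed

text \<open>First-renewal decomposition: \<open>(1 - F) / mean_time F\<close> is the density of \<open>S 0\<close> and
  \<open>(1 - F) + F = 1\<close>.\<close>

lemma integral_upto_first_renewal:
  assumes [measurable]: "k \<in> borel_measurable borel"
  shows "integral_upto k z = ennreal (mean_time F) * (\<integral>\<^sup>+\<omega>. k (z - S 0 \<omega>) \<partial>M)
            + (\<integral>\<^sup>+\<omega>. integral_upto k (z - S (Suc j) \<omega>) \<partial>M)"
proof -
  have "ennreal (mean_time F) * (\<integral>\<^sup>+\<omega>. k (z - S 0 \<omega>) \<partial>M)
          + (\<integral>\<^sup>+\<omega>. integral_upto k (z - S (Suc j) \<omega>) \<partial>M)
     = (\<integral>\<^sup>+ r. k r * ennreal (indicator {0..} (z - r) * (1 - F (z - r))) + k r * ennreal (F (z - r)) \<partial>lborel)"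
    unfolding mean_time_nn_integral_S_0[OF assms] nn_integral_integral_upto_S_Suc[OF assms]
    by (subst nn_integral_add) auto
  also have "\<dots> = integral_upto k z"
    unfolding integral_upto_def
  proof (intro nn_integral_cong)
    fix r
    show "k r * ennreal (indicator {0..} (z - r) * (1 - F (z - r))) + k r * ennreal (F (z - r))
            = k r * indicator {..z} r"
    proof (cases "r \<le> z")
      case True
      then have "ennreal (indicator {0..} (z - r) * (1 - F (z - r))) + ennreal (F (z - r)) = 1"
        using F_le_1[of "z - r"] F_nonneg[of "z - r"]
        by (subst ennreal_plus[symmetric]) (auto simp: indicator_def)
      then show ?thesis using True by (simp flip: distrib_left)
    next
      case False
      then show ?thesis using F_nonpos[of "z - r"] by (simp add: indicator_def)
    qed
  qed
  finally show ?thesis by simp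
qed

definition ordinary_epoch :: "nat \<Rightarrow> 'a \<Rightarrow> real" where
  "ordinary_epoch n \<omega> = (\<Sum>k\<in>{1..n}. S k \<omega>)"

lemma ordinary_epoch_measurable [measurable]: "ordinary_epoch n \<in> borel_measurable M"
  unfolding ordinary_epoch_def by measurable

lemma epoch_eq_S_0_plus_ordinary_epoch: "epoch n \<omega> = S 0 \<omega> + ordinary_epoch n \<omega>"
proof -
  have "{..n} = insert 0 {1..n}" by auto
  then show ?thesis unfolding renewal_epoch_def ordinary_epoch_def by simp
qed

lemma ordinary_epoch_Suc: "ordinary_epoch (Suc n) \<omega> = ordinary_epoch n \<omega> + S (Suc n) \<omega>"
  unfolding ordinary_epoch_def by simp

lemma indep_var_sums_S:
  assumes "J1 \<inter> J2 = {}" and "finite J1" "finite J2"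
  shows "indep_var borel (\<lambda>\<omega>. \<Sum>k\<in>J1. S k \<omega>) borel (\<lambda>\<omega>. \<Sum>k\<in>J2. S k \<omega>)"
proof -
  define K where "K = (\<lambda>b. if b then J1 else J2)"
  have "indep_vars (\<lambda>j. Pi\<^sub>M (K j) (\<lambda>_. borel)) (\<lambda>j \<omega>. \<lambda>i\<in>K j. S i \<omega>) UNIV"
    by (rule indep_vars_restrict[OF indep_S]) (use assms in \<open>auto simp: K_def disjoint_family_on_def\<close>)
  moreover have "(\<lambda>j. Pi\<^sub>M (K j) (\<lambda>_. borel))
                   = case_bool (Pi\<^sub>M J1 (\<lambda>_. borel)) (Pi\<^sub>M J2 (\<lambda>_. borel :: real measure))"
    and "(\<lambda>j \<omega>. \<lambda>i\<in>K j. S i \<omega>) = case_bool (\<lambda>\<omega>. \<lambda>i\<in>J1. S i \<omega>) (\<lambda>\<omega>. \<lambda>i\<in>J2. S i \<omega>)"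
    by (auto simp: K_def fun_eq_iff split: bool.split)
  ultimately have "indep_var (Pi\<^sub>M J1 (\<lambda>_. borel)) (\<lambda>\<omega>. \<lambda>i\<in>J1. S i \<omega>)
                             (Pi\<^sub>M J2 (\<lambda>_. borel)) (\<lambda>\<omega>. \<lambda>i\<in>J2. S i \<omega>)"
    unfolding indep_var_def by simp
  then have "indep_var borel ((\<lambda>x. \<Sum>k\<in>J1. x k) \<circ> (\<lambda>\<omega>. \<lambda>i\<in>J1. S i \<omega>))
                       borel ((\<lambda>x. \<Sum>k\<in>J2. x k) \<circ> (\<lambda>\<omega>. \<lambda>i\<in>J2. S i \<omega>))"
    by (rule indep_var_compose) measurable
  then show ?thesis by (simp add: comp_def)
qed

lemma integral_upto_renewal_partial:
  assumes k [measurable]: "k \<in> borel_measurable borel"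
  shows "integral_upto k z = ennreal (mean_time F) * (\<Sum>i<n. \<integral>\<^sup>+\<omega>. k (z - epoch i \<omega>) \<partial>M)
                 + (\<integral>\<^sup>+\<omega>. integral_upto k (z - ordinary_epoch n \<omega>) \<partial>M)"
proof (induction n)
  case 0
  then show ?case by (simp add: ordinary_epoch_def emeasure_space_1)
next
  case (Suc n)
  have "(\<integral>\<^sup>+\<omega>. k (z - ordinary_epoch n \<omega> - S 0 \<omega>) \<partial>M)
          = (\<integral>\<^sup>+\<omega>. (\<integral>\<^sup>+\<omega>'. k (z - ordinary_epoch n \<omega> - S 0 \<omega>') \<partial>M) \<partial>M)"
    using indep_var_sums_S[of "{1..n}" "{0}"] unfolding ordinary_epoch_def[abs_def]
    by (intro indep_var_nn_integral[where h="\<lambda>x y. k (z - x - y)"]) auto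
  moreover have "(\<integral>\<^sup>+\<omega>. integral_upto k (z - ordinary_epoch n \<omega> - S (Suc n) \<omega>) \<partial>M)
          = (\<integral>\<^sup>+\<omega>. (\<integral>\<^sup>+\<omega>'. integral_upto k (z - ordinary_epoch n \<omega> - S (Suc n) \<omega>') \<partial>M) \<partial>M)"
    using indep_var_sums_S[of "{1..n}" "{Suc n}"] unfolding ordinary_epoch_def[abs_def]
    by (intro indep_var_nn_integral[where h="\<lambda>x y. integral_upto k (z - x - y)"]) auto
  moreover have "(\<integral>\<^sup>+\<omega>. integral_upto k (z - ordinary_epoch n \<omega>) \<partial>M)
      = (\<integral>\<^sup>+\<omega>. ennreal (mean_time F) * (\<integral>\<^sup>+\<omega>'. k (z - ordinary_epoch n \<omega> - S 0 \<omega>') \<partial>M)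
            + (\<integral>\<^sup>+\<omega>'. integral_upto k (z - ordinary_epoch n \<omega> - S (Suc n) \<omega>') \<partial>M) \<partial>M)"
    by (intro nn_integral_cong integral_upto_first_renewal k)
  ultimately have "(\<integral>\<^sup>+\<omega>. integral_upto k (z - ordinary_epoch n \<omega>) \<partial>M)
      = ennreal (mean_time F) * (\<integral>\<^sup>+\<omega>. k (z - epoch n \<omega>) \<partial>M)
          + (\<integral>\<^sup>+\<omega>. integral_upto k (z - ordinary_epoch (Suc n) \<omega>) \<partial>M)"
    by (simp add: nn_integral_add nn_integral_cmult epoch_eq_S_0_plus_ordinary_epoch
        ordinary_epoch_Suc algebra_simps)
  then show ?case
    using Suc.IH by (simp add: algebra_simps distrib_left)
qed

lemma expected_renewals_le:
  assumes "0 \<le> z"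
  shows "mean_time F * (\<Sum>i<n. prob {\<omega> \<in> space M. epoch i \<omega> \<le> z}) \<le> z"
proof -
  let ?k = "indicator {0..} :: real \<Rightarrow> ennreal"
  have "integral_upto ?k z = emeasure lborel ({0..} \<inter> {..z})"
    unfolding integral_upto_def by (simp add: indicator_inter_arith[symmetric])
  also have "{0..} \<inter> {..z} = {0..z}" by auto
  also have "emeasure lborel {0..z} = ennreal z" using assms by simp
  finally have upto: "integral_upto ?k z = ennreal z" .
  have "(\<integral>\<^sup>+\<omega>. ?k (z - epoch i \<omega>) \<partial>M) = ennreal (prob {\<omega> \<in> space M. epoch i \<omega> \<le> z})" for i
  proof -
    have "(\<integral>\<^sup>+\<omega>. ?k (z - epoch i \<omega>) \<partial>M) = (\<integral>\<^sup>+\<omega>. indicator {\<omega> \<in> space M. epoch i \<omega> \<le> z} \<omega> \<partial>M)"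
      by (intro nn_integral_cong) (auto simp: indicator_def)
    then show ?thesis by (simp add: emeasure_eq_measure)
  qed
  then have "ennreal (mean_time F * (\<Sum>i<n. prob {\<omega> \<in> space M. epoch i \<omega> \<le> z})) \<le> ennreal z"
    using integral_upto_renewal_partial[of ?k z n] mean_time_nonneg
    by (simp add: upto ennreal_mult sum_nonneg le_iff_add flip: sum_ennreal)
  then show ?thesis
    using assms by (simp add: ennreal_le_iff)
qed

lemma epoch_unbounded_AE: "AE \<omega> in M. \<forall>m::nat. \<exists>n. real m < epoch n \<omega>"
proof -
  have "AE \<omega> in M. \<exists>n. real m < epoch n \<omega>" for m :: nat
  proof -
    define B where "B = {\<omega> \<in> space M. \<forall>n. epoch n \<omega> \<le> real m}"
    have [measurable]: "B \<in> sets M" unfolding B_def by measurable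
    have bound: "real n * (mean_time F * prob B) \<le> real m" for n
    proof -
      have "(\<Sum>i<n. prob B) \<le> (\<Sum>i<n. prob {\<omega> \<in> space M. epoch i \<omega> \<le> real m})"
        by (intro sum_mono finite_measure_mono) (auto simp: B_def)
      then show ?thesis
        using expected_renewals_le[of "real m" n] mean_time_pos
        by (simp add: algebra_simps) (meson mult_left_mono order_trans less_imp_le)
    qed
    have "prob B = 0"
    proof (rule ccontr)
      assume "prob B \<noteq> 0"
      then have "0 < prob B" using measure_nonneg[of M B] by linarith
      then have "0 < mean_time F * prob B" using mean_time_pos by simp
      then obtain n :: nat where "real m < real n * (mean_time F * prob B)"
        using reals_Archimedean3 by blast
      then show False using bound[of n] by simp
    qed
    then show ?thesis
      by (intro AE_I[where N=B]) (auto simp: B_def emeasure_eq_measure not_less)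
  qed
  then show ?thesis by (simp add: AE_all_countable)
qed

lemma ordinary_epoch_unbounded_AE: "AE \<omega> in M. \<forall>y. \<exists>n. y < ordinary_epoch n \<omega>"
  using epoch_unbounded_AE
proof eventually_elim
  case (elim \<omega>)
  show ?case
  proof
    fix y
    obtain m :: nat where "y + S 0 \<omega> < real m" using reals_Archimedean2 by blast
    moreover obtain n where "real m < epoch n \<omega>" using elim by blast
    ultimately have "y < ordinary_epoch n \<omega>"
      by (simp add: epoch_eq_S_0_plus_ordinary_epoch)
    then show "\<exists>n. y < ordinary_epoch n \<omega>" ..
  qed
qed

lemma INF_nn_integral_integral_upto_ordinary_epoch:
  assumes [measurable]: "k \<in> borel_measurable borel"
    and k_neg: "\<And>r. r < 0 \<Longrightarrow> k r = 0"
    and finite: "integral_upto k z < \<infinity>"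
  shows "(INF n. \<integral>\<^sup>+\<omega>. integral_upto k (z - ordinary_epoch n \<omega>) \<partial>M) = 0"
proof -
  have "(INF n. \<integral>\<^sup>+\<omega>. integral_upto k (z - ordinary_epoch n \<omega>) \<partial>M)
          = (\<integral>\<^sup>+\<omega>. (INF n. integral_upto k (z - ordinary_epoch n \<omega>)) \<partial>M)"
  proof (rule nn_integral_monotone_convergence_INF_AE'[symmetric])
    show "AE \<omega> in M. integral_upto k (z - ordinary_epoch (Suc n) \<omega>)
                       \<le> integral_upto k (z - ordinary_epoch n \<omega>)" for n
      using S_pos_all_AE
      by eventually_elim (auto intro!: integral_upto_mono simp: ordinary_epoch_Suc less_imp_le)
    show "(\<integral>\<^sup>+\<omega>. integral_upto k (z - ordinary_epoch 0 \<omega>) \<partial>M) < \<infinity>"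
      using finite by (simp add: ordinary_epoch_def emeasure_space_1)
  qed measurable
  also have "\<dots> = 0"
  proof (rule nn_integral_0_iff_AE[THEN iffD2])
    show "AE \<omega> in M. (INF n. integral_upto k (z - ordinary_epoch n \<omega>)) = 0"
      using ordinary_epoch_unbounded_AE
    proof eventually_elim
      case (elim \<omega>)
      then obtain n where "z < ordinary_epoch n \<omega>" by blast
      then have "integral_upto k (z - ordinary_epoch n \<omega>) = 0"
        unfolding integral_upto_def
        by (subst nn_integral_0_iff_AE) (auto simp: indicator_def k_neg)
      then show ?case by (metis INF_lower UNIV_I le_zero_eq)
    qed
  qed measurable
  finally show ?thesis .
qed

text \<open>The renewal density of the equilibrium process is the constant \<open>1 / mean_time F\<close>.\<close>

theorem renewal_identity:
  assumes k [measurable]: "k \<in> borel_measurable borel"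
    and k_neg: "\<And>r. r < 0 \<Longrightarrow> k r = 0"
    and finite: "integral_upto k z < \<infinity>"
  shows "ennreal (mean_time F) * (\<Sum>i. \<integral>\<^sup>+\<omega>. k (z - epoch i \<omega>) \<partial>M) = integral_upto k z"
proof -
  define a where "a i = (\<integral>\<^sup>+\<omega>. k (z - epoch i \<omega>) \<partial>M)" for i
  define b where "b n = (\<integral>\<^sup>+\<omega>. integral_upto k (z - ordinary_epoch n \<omega>) \<partial>M)" for n
  have partial: "integral_upto k z = ennreal (mean_time F) * (\<Sum>i<n. a i) + b n" for n
    unfolding a_def b_def by (rule integral_upto_renewal_partial[OF k])
  have upper: "ennreal (mean_time F) * (\<Sum>i. a i) \<le> integral_upto k z"
    unfolding suminf_eq_SUP SUP_mult_left_ennreal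
    using partial by (intro SUP_least) (metis le_iff_add)
  have "integral_upto k z \<le> ennreal (mean_time F) * (\<Sum>i. a i) + b n" for n
    unfolding partial[of n]
    by (intro add_right_mono mult_left_mono sum_le_suminf) auto
  then have "integral_upto k z \<le> (INF n. ennreal (mean_time F) * (\<Sum>i. a i) + b n)"
    by (rule INF_greatest)
  also have "\<dots> = ennreal (mean_time F) * (\<Sum>i. a i)"
    using INF_ennreal_const_add[of "ennreal (mean_time F) * (\<Sum>i. a i)" b]
      INF_nn_integral_integral_upto_ordinary_epoch[OF k k_neg finite]
    by (simp add: b_def)
  finally show ?thesis
    using upper unfolding a_def by (rule antisym[rotated])
qed

definition occupation_time :: "real \<Rightarrow> nat \<Rightarrow> 'a \<Rightarrow> real" where
  "occupation_time t i \<omega> = min t (epoch i \<omega>) - (case i of 0 \<Rightarrow> 0 | Suc j \<Rightarrow> min t (epoch j \<omega>))"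

lemma occupation_time_measurable [measurable]: "occupation_time t i \<in> borel_measurable M"
  unfolding occupation_time_def by (cases i) simp_all

lemma sum_occupation_time: "(\<Sum>i\<le>n. occupation_time t i \<omega>) = min t (epoch n \<omega>)"
  by (induction n) (simp_all add: occupation_time_def)

lemma occupation_time_bounds:
  assumes "0 \<le> t" and "\<forall>k. 0 < S k \<omega>"
  shows "0 \<le> occupation_time t i \<omega>" and "occupation_time t i \<omega> \<le> t"
proof -
  have "0 \<le> occupation_time t i \<omega> \<and> occupation_time t i \<omega> \<le> t"
  proof (cases i)
    case 0
    then show ?thesis using epoch_nonneg[OF assms(2), of 0] assms(1) by (auto simp: occupation_time_def)
  next
    case (Suc j)
    then show ?thesis
      using epoch_nonneg[OF assms(2), of j] epoch_mono[OF assms(2), of j "Suc j"] assms(1)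
      by (auto simp: occupation_time_def min_def)
  qed
  then show "0 \<le> occupation_time t i \<omega>" "occupation_time t i \<omega> \<le> t" by auto
qed

lemma nn_integral_occupation_time_0_square:
  assumes "0 \<le> t"
  shows "ennreal (mean_time F) * (\<integral>\<^sup>+\<omega>. ennreal ((occupation_time t 0 \<omega>)\<^sup>2) \<partial>M)
       = (\<integral>\<^sup>+ s. ennreal (2 * s * integrated_tail F s) * indicator {0..<t} s \<partial>lborel)"
  using nn_integral_min_S_0_square[OF assms]
  by (simp add: occupation_time_def renewal_epoch_def min.commute)

lemma nn_integral_occupation_time_Suc_square:
  "(\<integral>\<^sup>+\<omega>. ennreal ((occupation_time t (Suc j) \<omega>)\<^sup>2) \<partial>M)
     = (\<integral>\<^sup>+\<omega>. ennreal (truncated_second_moment F (t - epoch j \<omega>)) \<partial>M)"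
proof -
  let ?h = "\<lambda>x y. ennreal ((min y (max (t - x) 0))\<^sup>2)"
  have "(\<integral>\<^sup>+\<omega>. ennreal ((occupation_time t (Suc j) \<omega>)\<^sup>2) \<partial>M) = (\<integral>\<^sup>+\<omega>. ?h (epoch j \<omega>) (S (Suc j) \<omega>) \<partial>M)"
    using S_pos_AE[of "Suc j"]
    by (intro nn_integral_cong_AE, eventually_elim)
       (auto simp: occupation_time_def renewal_epoch_def min_def max_def)
  also have "\<dots> = (\<integral>\<^sup>+\<omega>. (\<integral>\<^sup>+\<omega>'. ?h (epoch j \<omega>) (S (Suc j) \<omega>') \<partial>M) \<partial>M)"
    using indep_var_sums_S[of "{..j}" "{Suc j}"] unfolding renewal_epoch_def[abs_def]
    by (intro indep_var_nn_integral) auto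
  also have "\<dots> = (\<integral>\<^sup>+\<omega>. ennreal (truncated_second_moment F (t - epoch j \<omega>)) \<partial>M)"
  proof (intro nn_integral_cong)
    fix \<omega>
    have "truncated_second_moment F (max (t - epoch j \<omega>) 0) = truncated_second_moment F (t - epoch j \<omega>)"
      using truncated_second_moment_nonpos[of 0] truncated_second_moment_nonpos[of "t - epoch j \<omega>"]
      by (cases "0 \<le> t - epoch j \<omega>") auto
    then show "(\<integral>\<^sup>+\<omega>'. ?h (epoch j \<omega>) (S (Suc j) \<omega>') \<partial>M)
                 = ennreal (truncated_second_moment F (t - epoch j \<omega>))"
      by (simp add: nn_integral_min_S_Suc_square)
  qed
  finally show ?thesis .
qed

lemma integral_upto_truncated_second_moment_finite:
  "integral_upto (\<lambda>r. ennreal (truncated_second_moment F r)) t < \<infinity>"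
proof -
  have "integral_upto (\<lambda>r. ennreal (truncated_second_moment F r)) t
          \<le> (\<integral>\<^sup>+ r. ennreal (truncated_second_moment F t) * indicator {0..max t 0} r \<partial>lborel)"
    unfolding integral_upto_def
    using truncated_second_moment_nonpos truncated_second_moment_mono
    by (intro nn_integral_mono) (auto simp: indicator_def mono_def intro!: ennreal_leI)
  also have "\<dots> < \<infinity>"
    by (simp add: nn_integral_cmult_indicator ennreal_mult_less_top)
  finally show ?thesis .
qed

lemma sum_nn_integral_occupation_time_square:
  assumes "0 \<le> t"
  shows "ennreal (mean_time F) * (\<Sum>i. \<integral>\<^sup>+\<omega>. ennreal ((occupation_time t i \<omega>)\<^sup>2) \<partial>M)
           = ennreal (msd_kernel_integral F t)"
proof -
  let ?a = "\<lambda>i. \<integral>\<^sup>+\<omega>. ennreal ((occupation_time t i \<omega>)\<^sup>2) \<partial>M"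
  let ?W = "\<lambda>r. ennreal (truncated_second_moment F r)"
  have [measurable]: "truncated_second_moment F \<in> borel_measurable borel"
    by (rule borel_measurable_mono[OF truncated_second_moment_mono])
  have "(\<Sum>i. ?a i) = ?a 0 + (\<Sum>j. ?a (Suc j))"
    using suminf_offset[of ?a 1] by (simp add: add.commute)
  then have "ennreal (mean_time F) * (\<Sum>i. ?a i)
      = (\<integral>\<^sup>+ s. ennreal (2 * s * integrated_tail F s) * indicator {0..<t} s \<partial>lborel)
          + integral_upto ?W t"
    using renewal_identity[of ?W t] truncated_second_moment_nonpos
      integral_upto_truncated_second_moment_finite
    by (simp add: distrib_left nn_integral_occupation_time_0_square[OF assms]
        nn_integral_occupation_time_Suc_square)
  also have "\<dots> = (\<integral>\<^sup>+ s. ennreal (2 * s * integrated_tail F s) * indicator {0..t} s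
                            + ?W s * indicator {..t} s \<partial>lborel)"
    using AE_lborel_singleton[of t]
    by (simp add: integral_upto_def nn_integral_add[symmetric])
       (intro nn_integral_cong_AE, auto simp: indicator_def)
  also have "\<dots> = (\<integral>\<^sup>+ s. ennreal (indicator {0..t} s * msd_kernel F s) \<partial>lborel)"
  proof (intro nn_integral_cong)
    fix s
    show "ennreal (2 * s * integrated_tail F s) * indicator {0..t} s + ?W s * indicator {..t} s
            = ennreal (indicator {0..t} s * msd_kernel F s)"
      using integrated_tail_nonneg[of s] truncated_second_moment_nonneg[of s]
        truncated_second_moment_nonpos[of s]
      by (cases "0 \<le> s") (auto simp: msd_kernel_def indicator_def ennreal_plus)
  qed
  also have "\<dots> = ennreal (msd_kernel_integral F t)"
    unfolding msd_kernel_integral_def set_lebesgue_integral_def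
    using msd_kernel_integrable[of t] msd_kernel_nonneg unfolding set_integrable_def
    by (subst nn_integral_eq_integral) (auto simp: indicator_def)
  finally show ?thesis .
qed

end

section \<open>Displacement of the velocity process\<close>

lemma distr_eq_integrable_iff:
  fixes g :: "'v::topological_space \<Rightarrow> 'b::{banach, second_countable_topology}"
  assumes "distr M borel X = distr N borel Y" and [measurable]: "X \<in> borel_measurable M"
    "Y \<in> borel_measurable N" "g \<in> borel_measurable borel"
  shows "integrable M (\<lambda>\<omega>. g (X \<omega>)) \<longleftrightarrow> integrable N (\<lambda>\<omega>. g (Y \<omega>))"
  using integrable_distr_eq[of X M borel g] integrable_distr_eq[of Y N borel g] assms(1) by simp

lemma distr_eq_integral_eq:
  fixes g :: "'v::topological_space \<Rightarrow> 'b::{banach, second_countable_topology}"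
  assumes "distr M borel X = distr N borel Y" and [measurable]: "X \<in> borel_measurable M"
    "Y \<in> borel_measurable N" "g \<in> borel_measurable borel"
  shows "(\<integral>\<omega>. g (X \<omega>) \<partial>M) = (\<integral>\<omega>. g (Y \<omega>) \<partial>N)"
  using integral_distr[of X M borel g] integral_distr[of Y N borel g] assms(1) by simp

lemma (in prob_space) indep_var_if_indep_generators:
  assumes indep: "indep_set (sigma_sets (space M) A) (sigma_sets (space M) B)"
    and A: "A \<subseteq> Pow (space M)" and B: "B \<subseteq> Pow (space M)"
    and f: "f \<in> borel_measurable (sigma (space M) A)" and g: "g \<in> borel_measurable (sigma (space M) B)"
    and [measurable]: "f \<in> borel_measurable M" "g \<in> borel_measurable M"
  shows "indep_var borel f borel g"
proof -
  have f_sub: "sigma_sets (space M) {f -` X \<inter> space M | X. X \<in> sets borel} \<subseteq> sigma_sets (space M) A"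
    using measurable_sets[OF f] A by (intro sigma_sets_mono) (auto simp: sets_measure_of)
  have g_sub: "sigma_sets (space M) {g -` X \<inter> space M | X. X \<in> sets borel} \<subseteq> sigma_sets (space M) B"
    using measurable_sets[OF g] B by (intro sigma_sets_mono) (auto simp: sets_measure_of)
  have "indep_set (sigma_sets (space M) {f -` X \<inter> space M | X. X \<in> sets borel})
                  (sigma_sets (space M) {g -` X \<inter> space M | X. X \<in> sets borel})"
    using indep unfolding indep_set_def
  proof (rule indep_sets_mono_sets)
    fix b :: bool
    show "case_bool (sigma_sets (space M) {f -` X \<inter> space M | X. X \<in> sets borel})
            (sigma_sets (space M) {g -` X \<inter> space M | X. X \<in> sets borel}) b
          \<subseteq> case_bool (sigma_sets (space M) A) (sigma_sets (space M) B) b"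
      using f_sub g_sub by (cases b) simp_all
  qed
  then show ?thesis
    unfolding indep_var_eq by simp
qed

lemma power2_sum_weighted_le:
  fixes a x :: "'i \<Rightarrow> real"
  assumes "\<And>i. i \<in> A \<Longrightarrow> 0 \<le> a i"
  shows "(\<Sum>i\<in>A. a i * x i)\<^sup>2 \<le> (\<Sum>i\<in>A. a i) * (\<Sum>i\<in>A. a i * (x i)\<^sup>2)"
proof -
  have "(\<Sum>i\<in>A. sqrt (a i) * (sqrt (a i) * x i))\<^sup>2
          \<le> (\<Sum>i\<in>A. (sqrt (a i))\<^sup>2) * (\<Sum>i\<in>A. (sqrt (a i) * x i)\<^sup>2)"
    by (rule Cauchy_Schwarz_ineq_sum)
  also have "(\<Sum>i\<in>A. sqrt (a i) * (sqrt (a i) * x i)) = (\<Sum>i\<in>A. a i * x i)"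
    using assms by (intro sum.cong) (simp_all add: mult.assoc[symmetric])
  also have "(\<Sum>i\<in>A. (sqrt (a i) * x i)\<^sup>2) = (\<Sum>i\<in>A. a i * (x i)\<^sup>2)"
    using assms by (intro sum.cong) (simp_all add: power_mult_distrib)
  finally show ?thesis
    using assms by simp
qed

lemma integral_indicator_Icc_Ico:
  fixes a b t :: real
  assumes "0 \<le> a" "a \<le> b" "0 \<le> t"
  shows "(LINT s|lborel. indicator {0..t} s * indicator {a..<b} s) = min t b - min t a"
proof -
  have "AE s in lborel. indicator {0..t} s * indicator {a..<b} s = (indicator {min t a..min t b} s :: real)"
    using AE_lborel_singleton[of b] AE_lborel_singleton[of t]
    by eventually_elim (use assms in \<open>auto simp: indicator_def min_def\<close>)
  then have "(LINT s|lborel. indicator {0..t} s * indicator {a..<b} s)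
               = (LINT s|lborel. (indicator {min t a..min t b} s :: real))"
    by (intro integral_cong_AE) simp_all
  also have "\<dots> = min t b - min t a"
    using assms by (simp add: min_def)
  finally show ?thesis .
qed

locale renewal_velocity_model = equilibrium_renewal M F S
  for M :: "'a measure" and F S +
  fixes V :: "nat \<Rightarrow> 'a \<Rightarrow> 'v::euclidean_space"
  assumes indep_V: "indep_vars (\<lambda>_. borel) V UNIV"
    and indep_S_V: "indep_set
       (sigma_sets (space M) (\<Union>k. {S k -` A \<inter> space M | A. A \<in> sets borel}))
       (sigma_sets (space M) (\<Union>k. {V k -` B \<inter> space M | B. B \<in> sets borel}))"
    and distr_V: "\<And>i. distr M borel (V i) = distr M borel (V 0)"
    and V_0_integrable: "integrable M (V 0)"
    and V_0_mean_zero: "(\<integral>\<omega>. V 0 \<omega> \<partial>M) = 0"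
    and V_0_square_integrable: "integrable M (\<lambda>\<omega>. (norm (V 0 \<omega>))\<^sup>2)"
begin

abbreviation "sigma_S \<equiv> sigma (space M) (\<Union>k. {S k -` A \<inter> space M | A. A \<in> sets borel})"
abbreviation "sigma_V \<equiv> sigma (space M) (\<Union>k. {V k -` A \<inter> space M | A. A \<in> sets borel})"
abbreviation "mean_square_speed \<equiv> (\<integral>\<omega>. (norm (V 0 \<omega>))\<^sup>2 \<partial>M)"

lemma V_measurable [measurable]: "V k \<in> borel_measurable M"
  using indep_V unfolding indep_vars_def by auto

lemma space_sigma_S: "space sigma_S = space M"
  by (rule space_measure_of) auto

lemma space_sigma_V: "space sigma_V = space M"
  by (rule space_measure_of) auto

lemma S_measurable_sigma_S [measurable]: "S k \<in> borel_measurable sigma_S"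
proof (rule measurableI)
  fix A :: "real set" assume "A \<in> sets borel"
  then show "S k -` A \<inter> space sigma_S \<in> sets sigma_S"
    unfolding space_sigma_S by (subst sets_measure_of) (auto intro!: sigma_sets.Basic)
qed simp

lemma V_measurable_sigma_V [measurable]: "V k \<in> borel_measurable sigma_V"
proof (rule measurableI)
  fix A :: "'v set" assume "A \<in> sets borel"
  then show "V k -` A \<inter> space sigma_V \<in> sets sigma_V"
    unfolding space_sigma_V by (subst sets_measure_of) (auto intro!: sigma_sets.Basic)
qed simp

lemma indep_var_S_V:
  fixes f g :: "'a \<Rightarrow> real"
  assumes "f \<in> borel_measurable sigma_S" "g \<in> borel_measurable sigma_V"
    and "f \<in> borel_measurable M" "g \<in> borel_measurable M"
  shows "indep_var borel f borel g"
  using assms by (intro indep_var_if_indep_generators[OF indep_S_V]) auto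

lemma occupation_time_measurable_sigma_S [measurable]: "occupation_time t i \<in> borel_measurable sigma_S"
  unfolding occupation_time_def renewal_epoch_def by (cases i) simp_all

lemma integrable_V: "integrable M (V i)"
proof -
  have "integrable M (\<lambda>\<omega>. V i \<omega>) \<longleftrightarrow> integrable M (\<lambda>\<omega>. V 0 \<omega>)"
    by (rule distr_eq_integrable_iff[OF distr_V]) measurable
  then show ?thesis using V_0_integrable by simp
qed

lemma integral_V_eq_0: "(\<integral>\<omega>. V i \<omega> \<partial>M) = 0"
proof -
  have "(\<integral>\<omega>. V i \<omega> \<partial>M) = (\<integral>\<omega>. V 0 \<omega> \<partial>M)"
    by (rule distr_eq_integral_eq[OF distr_V]) measurable
  then show ?thesis using V_0_mean_zero by simp
qed

lemma integrable_V_square: "integrable M (\<lambda>\<omega>. (norm (V i \<omega>))\<^sup>2)"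
proof -
  have "integrable M (\<lambda>\<omega>. (norm (V i \<omega>))\<^sup>2) \<longleftrightarrow> integrable M (\<lambda>\<omega>. (norm (V 0 \<omega>))\<^sup>2)"
    by (rule distr_eq_integrable_iff[OF distr_V]) measurable
  then show ?thesis using V_0_square_integrable by simp
qed

lemma integral_V_square: "(\<integral>\<omega>. (norm (V i \<omega>))\<^sup>2 \<partial>M) = mean_square_speed"
  by (rule distr_eq_integral_eq[OF distr_V]) measurable

lemma integrable_inner_V: "integrable M (\<lambda>\<omega>. V i \<omega> \<bullet> V j \<omega>)"
proof (rule Bochner_Integration.integrable_bound)
  show "integrable M (\<lambda>\<omega>. (norm (V i \<omega>))\<^sup>2 + (norm (V j \<omega>))\<^sup>2)"
    using integrable_V_square by auto
  show "AE \<omega> in M. norm (V i \<omega> \<bullet> V j \<omega>) \<le> norm ((norm (V i \<omega>))\<^sup>2 + (norm (V j \<omega>))\<^sup>2)"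
  proof (intro AE_I2)
    fix \<omega>
    have "\<bar>V i \<omega> \<bullet> V j \<omega>\<bar> \<le> norm (V i \<omega>) * norm (V j \<omega>)" by (rule Cauchy_Schwarz_ineq2)
    also have "\<dots> \<le> (norm (V i \<omega>))\<^sup>2 + (norm (V j \<omega>))\<^sup>2"
      using sum_squares_bound[of "norm (V i \<omega>)" "norm (V j \<omega>)"]
        mult_nonneg_nonneg[OF norm_ge_zero norm_ge_zero, of "V i \<omega>" "V j \<omega>"] by linarith
    finally show "norm (V i \<omega> \<bullet> V j \<omega>) \<le> norm ((norm (V i \<omega>))\<^sup>2 + (norm (V j \<omega>))\<^sup>2)" by simp
  qed
qed measurable

lemma integral_inner_V: "(\<integral>\<omega>. V i \<omega> \<bullet> V j \<omega> \<partial>M) = (if i = j then mean_square_speed else 0)"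
proof (cases "i = j")
  case True
  then show ?thesis using integral_V_square[of j] by (simp add: power2_norm_eq_inner)
next
  case False
  have "indep_var (Pi\<^sub>M {i} (\<lambda>_. borel)) (\<lambda>\<omega>. restrict (\<lambda>k. V k \<omega>) {i})
                  (Pi\<^sub>M {j} (\<lambda>_. borel)) (\<lambda>\<omega>. restrict (\<lambda>k. V k \<omega>) {j})"
    by (rule indep_var_restrict[OF indep_V]) (use False in auto)
  then have "indep_var borel ((\<lambda>x. x i \<bullet> b) \<circ> (\<lambda>\<omega>. restrict (\<lambda>k. V k \<omega>) {i}))
                       borel ((\<lambda>x. x j \<bullet> b) \<circ> (\<lambda>\<omega>. restrict (\<lambda>k. V k \<omega>) {j}))" for b
    by (rule indep_var_compose) measurable
  then have indep: "indep_var borel (\<lambda>\<omega>. V i \<omega> \<bullet> b) borel (\<lambda>\<omega>. V j \<omega> \<bullet> b)" for b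
    by (simp add: comp_def)
  have integrable: "integrable M (\<lambda>\<omega>. V k \<omega> \<bullet> b)" for k b
    by (intro integrable_inner_left integrable_V)
  have "(\<integral>\<omega>. V i \<omega> \<bullet> V j \<omega> \<partial>M) = (\<integral>\<omega>. (\<Sum>b\<in>Basis. (V i \<omega> \<bullet> b) * (V j \<omega> \<bullet> b)) \<partial>M)"
    by (intro Bochner_Integration.integral_cong refl) (rule euclidean_inner)
  also have "\<dots> = (\<Sum>b\<in>Basis. (\<integral>\<omega>. (V i \<omega> \<bullet> b) * (V j \<omega> \<bullet> b) \<partial>M))"
    by (rule Bochner_Integration.integral_sum[OF indep_var_integrable[OF indep integrable integrable]])
  also have "\<dots> = (\<Sum>b\<in>Basis. (\<integral>\<omega>. V i \<omega> \<bullet> b \<partial>M) * (\<integral>\<omega>. V j \<omega> \<bullet> b \<partial>M))"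
    by (rule sum.cong[OF refl indep_var_lebesgue_integral[OF indep integrable integrable]])
  finally show ?thesis
    using False integrable_V integral_V_eq_0 by simp
qed

definition renewal_interval :: "nat \<Rightarrow> 'a \<Rightarrow> real set" where
  "renewal_interval i \<omega> = {(case i of 0 \<Rightarrow> 0 | Suc j \<Rightarrow> epoch j \<omega>)..<epoch i \<omega>}"

definition partial_displacement :: "real \<Rightarrow> nat \<Rightarrow> 'a \<Rightarrow> 'v" where
  "partial_displacement t n \<omega> = (\<Sum>i\<le>n. occupation_time t i \<omega> *\<^sub>R V i \<omega>)"

lemma partial_displacement_measurable [measurable]: "partial_displacement t n \<in> borel_measurable M"
  unfolding partial_displacement_def by measurable

lemma velocity_proc_eq_sum:
  assumes pos: "\<forall>k. 0 < S k \<omega>" and s: "0 \<le> s" "s < epoch n \<omega>"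
  shows "velocity_proc S V s \<omega> = (\<Sum>i\<le>n. indicator (renewal_interval i \<omega>) s *\<^sub>R V i \<omega>)"
proof -
  define m where "m = (LEAST i. s < epoch i \<omega>)"
  have m: "s < epoch m \<omega>" "m \<le> n"
    unfolding m_def using s(2) by (auto intro: LeastI Least_le)
  have before_m: "\<not> s < epoch i \<omega>" if "i < m" for i
    using not_less_Least[OF that[unfolded m_def]] m_def by simp
  have "s \<in> renewal_interval i \<omega> \<longleftrightarrow> i = m" for i
  proof
    assume i: "s \<in> renewal_interval i \<omega>"
    have "\<not> m < i"
    proof
      assume "m < i"
      then obtain j where "i = Suc j" "m \<le> j" by (cases i) auto
      then show False
        using i m(1) epoch_mono[OF pos, of m j] by (simp add: renewal_interval_def)
    qed
    moreover have "\<not> i < m" using i before_m by (auto simp: renewal_interval_def)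
    ultimately show "i = m" by simp
  next
    assume "i = m"
    then show "s \<in> renewal_interval i \<omega>"
      using m(1) before_m s(1) by (cases m) (auto simp: renewal_interval_def not_less)
  qed
  then have "(\<Sum>i\<le>n. indicator (renewal_interval i \<omega>) s *\<^sub>R V i \<omega>) = (\<Sum>i\<le>n. if i = m then V i \<omega> else 0)"
    by (intro sum.cong) (auto simp: indicator_def)
  also have "\<dots> = V m \<omega>" using m(2) by simp
  finally show ?thesis unfolding velocity_proc_def m_def by simp
qed

lemma integrable_indicator_renewal_interval:
  "integrable lborel (\<lambda>s. indicator {0..t} s * indicator (renewal_interval i \<omega>) s :: real)"
proof -
  have "integrable lborel (\<lambda>s. indicator ({0..t} \<inter> renewal_interval i \<omega>) s :: real)"
    by (rule integrable_real_indicator)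
       (auto intro: le_less_trans[OF emeasure_mono[of _ "{0..t}"]]
             simp: emeasure_lborel_Icc_eq renewal_interval_def)
  then show ?thesis by (simp add: indicator_inter_arith)
qed

lemma integral_indicator_renewal_interval:
  assumes "0 \<le> t" and pos: "\<forall>k. 0 < S k \<omega>"
  shows "(LINT s|lborel. indicator {0..t} s * indicator (renewal_interval i \<omega>) s) = occupation_time t i \<omega>"
proof -
  have "0 \<le> (case i of 0 \<Rightarrow> 0 | Suc j \<Rightarrow> epoch j \<omega>)"
    and "(case i of 0 \<Rightarrow> 0 | Suc j \<Rightarrow> epoch j \<omega>) \<le> epoch i \<omega>"
    using epoch_nonneg[OF pos] epoch_mono[OF pos] by (auto split: nat.split)
  then show ?thesis
    unfolding renewal_interval_def using assms(1)
    by (subst integral_indicator_Icc_Ico) (auto simp: occupation_time_def split: nat.split)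
qed

lemma displacement_eq_partial_displacement:
  assumes t: "0 \<le> t" and pos: "\<forall>k. 0 < S k \<omega>" and n: "t < epoch n \<omega>"
  shows "displacement S V t \<omega> = partial_displacement t n \<omega>"
proof -
  let ?I = "\<lambda>i s. indicator {0..t} s * indicator (renewal_interval i \<omega>) s :: real"
  have "displacement S V t \<omega>
          = (LINT s:{0..t}|lborel. (\<Sum>i\<le>n. indicator (renewal_interval i \<omega>) s *\<^sub>R V i \<omega>))"
    unfolding displacement_def
  proof (rule set_lebesgue_integral_cong)
    show "\<forall>s. s \<in> {0..t} \<longrightarrow>
            velocity_proc S V s \<omega> = (\<Sum>i\<le>n. indicator (renewal_interval i \<omega>) s *\<^sub>R V i \<omega>)"
      using n velocity_proc_eq_sum[OF pos] by force
  qed simp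
  also have "\<dots> = (LINT s|lborel. (\<Sum>i\<le>n. ?I i s *\<^sub>R V i \<omega>))"
    unfolding set_lebesgue_integral_def
    by (intro Bochner_Integration.integral_cong refl) (simp only: scaleR_sum_right scaleR_scaleR)
  also have "\<dots> = (\<Sum>i\<le>n. (LINT s|lborel. ?I i s *\<^sub>R V i \<omega>))"
    by (intro Bochner_Integration.integral_sum integrable_scaleR_left
        integrable_indicator_renewal_interval)
  also have "\<dots> = (\<Sum>i\<le>n. occupation_time t i \<omega> *\<^sub>R V i \<omega>)"
    by (intro sum.cong refl)
       (simp add: integrable_indicator_renewal_interval integral_indicator_renewal_interval[OF t pos])
  finally show ?thesis
    unfolding partial_displacement_def .
qed

lemma displacement_measurable [measurable]: "displacement S V t \<in> borel_measurable M"
proof -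
  have "(\<lambda>x. LEAST i. snd x < epoch i (fst x)) \<in> measurable (M \<Otimes>\<^sub>M lborel) (count_space UNIV)"
    by (rule measurable_Least) measurable
  then have "(\<lambda>(\<omega>, s). LEAST i. s < epoch i \<omega>) \<in> measurable (M \<Otimes>\<^sub>M lborel) (count_space UNIV)"
    by (simp add: case_prod_beta)
  then have "(\<lambda>x. (\<lambda>i (\<omega>, s). V i \<omega>) ((\<lambda>(\<omega>, s). LEAST i. s < epoch i \<omega>) x) x)
               \<in> borel_measurable (M \<Otimes>\<^sub>M lborel)"
    by (rule measurable_compose_countable[rotated]) measurable
  then have velocity: "(\<lambda>(\<omega>, s). velocity_proc S V s \<omega>) \<in> borel_measurable (M \<Otimes>\<^sub>M lborel)"
    unfolding velocity_proc_def by (simp add: case_prod_beta)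
  have "(\<lambda>\<omega>. LINT s|lborel. (\<lambda>\<omega> s. indicator {0..t} s *\<^sub>R velocity_proc S V s \<omega>) \<omega> s)
          \<in> borel_measurable M"
    by (rule lborel.borel_measurable_lebesgue_integral) (use velocity in measurable)
  then show ?thesis
    unfolding displacement_def[abs_def] set_lebesgue_integral_def by simp
qed

lemma occupation_time_bounds_AE:
  assumes "0 \<le> t"
  shows "AE \<omega> in M. \<forall>i. 0 \<le> occupation_time t i \<omega> \<and> occupation_time t i \<omega> \<le> t"
  using S_pos_all_AE by eventually_elim (use occupation_time_bounds[OF assms] in blast)

lemma occupation_time_product_integrable:
  assumes "0 \<le> t"
  shows "integrable M (\<lambda>\<omega>. occupation_time t i \<omega> * occupation_time t j \<omega>)"
proof (rule Bochner_Integration.integrable_bound)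
  show "integrable M (\<lambda>\<omega>. t * t)" by simp
  show "AE \<omega> in M. norm (occupation_time t i \<omega> * occupation_time t j \<omega>) \<le> norm (t * t)"
    using occupation_time_bounds_AE[OF assms]
    by eventually_elim (auto intro!: mult_mono simp: abs_mult)
qed measurable

lemma integral_occupation_time_inner_V:
  assumes "0 \<le> t"
  shows "integrable M (\<lambda>\<omega>. (occupation_time t i \<omega> * occupation_time t j \<omega>) * (V i \<omega> \<bullet> V j \<omega>))"
    and "(\<integral>\<omega>. (occupation_time t i \<omega> * occupation_time t j \<omega>) * (V i \<omega> \<bullet> V j \<omega>) \<partial>M)
           = (\<integral>\<omega>. occupation_time t i \<omega> * occupation_time t j \<omega> \<partial>M)
             * (if i = j then mean_square_speed else 0)"
proof -
  have indep: "indep_var borel (\<lambda>\<omega>. occupation_time t i \<omega> * occupation_time t j \<omega>)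
                         borel (\<lambda>\<omega>. V i \<omega> \<bullet> V j \<omega>)"
    by (rule indep_var_S_V) measurable
  show "integrable M (\<lambda>\<omega>. (occupation_time t i \<omega> * occupation_time t j \<omega>) * (V i \<omega> \<bullet> V j \<omega>))"
    by (rule indep_var_integrable[OF indep occupation_time_product_integrable[OF assms] integrable_inner_V])
  show "(\<integral>\<omega>. (occupation_time t i \<omega> * occupation_time t j \<omega>) * (V i \<omega> \<bullet> V j \<omega>) \<partial>M)
          = (\<integral>\<omega>. occupation_time t i \<omega> * occupation_time t j \<omega> \<partial>M)
            * (if i = j then mean_square_speed else 0)"
    unfolding integral_inner_V[symmetric]
    by (rule indep_var_lebesgue_integral[OF indep occupation_time_product_integrable[OF assms]
          integrable_inner_V])
qed

lemma integral_norm_partial_displacement_square: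
  assumes "0 \<le> t"
  shows "(\<integral>\<omega>. (norm (partial_displacement t n \<omega>))\<^sup>2 \<partial>M)
           = mean_square_speed * (\<Sum>i\<le>n. \<integral>\<omega>. (occupation_time t i \<omega>)\<^sup>2 \<partial>M)"
proof -
  have "(norm (partial_displacement t n \<omega>))\<^sup>2 = (\<Sum>i\<le>n. \<Sum>j\<le>n.
          (occupation_time t i \<omega> * occupation_time t j \<omega>) * (V i \<omega> \<bullet> V j \<omega>))" for \<omega>
    unfolding power2_norm_eq_inner partial_displacement_def inner_sum_left inner_sum_right
    by (simp add: sum_distrib_left algebra_simps inner_commute)
  then have "(\<integral>\<omega>. (norm (partial_displacement t n \<omega>))\<^sup>2 \<partial>M) = (\<Sum>i\<le>n. \<Sum>j\<le>n.
      (\<integral>\<omega>. (occupation_time t i \<omega> * occupation_time t j \<omega>) * (V i \<omega> \<bullet> V j \<omega>) \<partial>M))"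
    using integral_occupation_time_inner_V(1)[OF assms]
    by (simp add: Bochner_Integration.integral_sum Bochner_Integration.integrable_sum)
  also have "\<dots> = (\<Sum>i\<le>n. \<Sum>j\<le>n. (\<integral>\<omega>. occupation_time t i \<omega> * occupation_time t j \<omega> \<partial>M)
                         * (if i = j then mean_square_speed else 0))"
    by (simp only: integral_occupation_time_inner_V(2)[OF assms])
  also have "\<dots> = (\<Sum>i\<le>n. (\<integral>\<omega>. occupation_time t i \<omega> * occupation_time t i \<omega> \<partial>M) * mean_square_speed)"
    by (simp add: if_distrib cong: if_cong)
  finally show ?thesis
    by (simp add: sum_distrib_left power2_eq_square mult.commute)
qed

lemma occupation_time_square_sums:
  assumes "0 \<le> t"
  shows "(\<lambda>i. \<integral>\<omega>. (occupation_time t i \<omega>)\<^sup>2 \<partial>M) sums (msd_kernel_integral F t / mean_time F)"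
proof -
  let ?a = "\<lambda>i. \<integral>\<omega>. (occupation_time t i \<omega>)\<^sup>2 \<partial>M"
  have "ennreal (?a i) = (\<integral>\<^sup>+\<omega>. ennreal ((occupation_time t i \<omega>)\<^sup>2) \<partial>M)" for i
    using occupation_time_product_integrable[OF assms, of i i]
    by (subst nn_integral_eq_integral) (auto simp: power2_eq_square)
  then have "ennreal (mean_time F) * (\<Sum>i. ennreal (?a i))
               = ennreal (mean_time F) * ennreal (msd_kernel_integral F t / mean_time F)"
    using sum_nn_integral_occupation_time_square[OF assms] mean_time_pos
    by (simp flip: ennreal_mult add: msd_kernel_integral_nonneg)
  then have "(\<Sum>i. ennreal (?a i)) = ennreal (msd_kernel_integral F t / mean_time F)"
    using mean_time_pos by (simp add: ennreal_mult_cancel_left)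
  then have "(\<lambda>i. ennreal (?a i)) sums ennreal (msd_kernel_integral F t / mean_time F)"
    using summable_sums[OF summableI, of "\<lambda>i. ennreal (?a i)"] by simp
  then show ?thesis
    using mean_time_pos msd_kernel_integral_nonneg by simp
qed

definition occupation_energy :: "real \<Rightarrow> 'a \<Rightarrow> ennreal" where
  "occupation_energy t \<omega> = (\<Sum>i. ennreal (occupation_time t i \<omega> * (norm (V i \<omega>))\<^sup>2))"

lemma occupation_energy_measurable [measurable]: "occupation_energy t \<in> borel_measurable M"
  unfolding occupation_energy_def by measurable

lemma nn_integral_occupation_time_mult_V_square:
  "(\<integral>\<^sup>+\<omega>. ennreal (occupation_time t i \<omega> * (norm (V i \<omega>))\<^sup>2) \<partial>M)
     = (\<integral>\<^sup>+\<omega>. ennreal (occupation_time t i \<omega>) \<partial>M) * ennreal mean_square_speed"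
proof -
  have speed: "(\<integral>\<^sup>+\<omega>. ennreal ((norm (V i \<omega>))\<^sup>2) \<partial>M) = ennreal mean_square_speed"
    using integrable_V_square[of i] integral_V_square[of i] by (subst nn_integral_eq_integral) auto
  have "indep_var borel (occupation_time t i) borel (\<lambda>\<omega>. (norm (V i \<omega>))\<^sup>2)"
    by (rule indep_var_S_V) measurable
  then have "(\<integral>\<^sup>+\<omega>. ennreal (occupation_time t i \<omega> * (norm (V i \<omega>))\<^sup>2) \<partial>M)
      = (\<integral>\<^sup>+\<omega>. (\<integral>\<^sup>+\<omega>'. ennreal (occupation_time t i \<omega>) * ennreal ((norm (V i \<omega>'))\<^sup>2) \<partial>M) \<partial>M)"
    by (subst indep_var_nn_integral[where h="\<lambda>x y. ennreal (x * y)"])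
       (auto intro!: nn_integral_cong simp: ennreal_mult'')
  also have "\<dots> = (\<integral>\<^sup>+\<omega>. ennreal (occupation_time t i \<omega>) * ennreal mean_square_speed \<partial>M)"
    by (simp add: nn_integral_cmult speed)
  finally show ?thesis
    by (simp add: nn_integral_multc)
qed

lemma suminf_occupation_time_le_AE:
  assumes "0 \<le> t"
  shows "AE \<omega> in M. (\<Sum>i. ennreal (occupation_time t i \<omega>)) \<le> ennreal t"
  using occupation_time_bounds_AE[OF assms]
proof eventually_elim
  case (elim \<omega>)
  have "(\<Sum>i<n. ennreal (occupation_time t i \<omega>)) \<le> ennreal t" for n
  proof (cases n)
    case (Suc m)
    then have "(\<Sum>i<n. occupation_time t i \<omega>) \<le> t"
      by (simp add: lessThan_Suc_atMost sum_occupation_time)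
    then show ?thesis using elim by (simp add: sum_ennreal ennreal_leI)
  qed simp
  then show ?case unfolding suminf_eq_SUP by (rule SUP_least)
qed

lemma nn_integral_occupation_energy_le:
  assumes "0 \<le> t"
  shows "(\<integral>\<^sup>+\<omega>. occupation_energy t \<omega> \<partial>M) \<le> ennreal t * ennreal mean_square_speed"
proof -
  have "(\<integral>\<^sup>+\<omega>. occupation_energy t \<omega> \<partial>M)
      = (\<integral>\<^sup>+\<omega>. (\<Sum>i. ennreal (occupation_time t i \<omega>)) \<partial>M) * ennreal mean_square_speed"
    unfolding occupation_energy_def
    by (simp add: nn_integral_suminf nn_integral_occupation_time_mult_V_square ennreal_suminf_multc)
  moreover have "(\<integral>\<^sup>+\<omega>. (\<Sum>i. ennreal (occupation_time t i \<omega>)) \<partial>M) \<le> ennreal t"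
    using nn_integral_mono_AE[OF suminf_occupation_time_le_AE[OF assms]]
    by (simp add: emeasure_space_1)
  ultimately show ?thesis
    by (simp add: mult_right_mono)
qed

lemma norm_partial_displacement_square_le:
  assumes "0 \<le> t" and bounds: "\<forall>i. 0 \<le> occupation_time t i \<omega> \<and> occupation_time t i \<omega> \<le> t"
    and finite: "occupation_energy t \<omega> < \<infinity>"
  shows "(norm (partial_displacement t n \<omega>))\<^sup>2 \<le> t * enn2real (occupation_energy t \<omega>)"
proof -
  have "ennreal (\<Sum>i\<le>n. occupation_time t i \<omega> * (norm (V i \<omega>))\<^sup>2)
          = (\<Sum>i<Suc n. ennreal (occupation_time t i \<omega> * (norm (V i \<omega>))\<^sup>2))"
    using bounds by (simp add: sum_ennreal lessThan_Suc_atMost)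
  also have "\<dots> \<le> occupation_energy t \<omega>"
    unfolding occupation_energy_def by (rule sum_le_suminf) auto
  finally have "ennreal (\<Sum>i\<le>n. occupation_time t i \<omega> * (norm (V i \<omega>))\<^sup>2) \<le> occupation_energy t \<omega>" .
  then have "enn2real (ennreal (\<Sum>i\<le>n. occupation_time t i \<omega> * (norm (V i \<omega>))\<^sup>2))
               \<le> enn2real (occupation_energy t \<omega>)"
    using finite by (intro enn2real_mono) auto
  then have energy: "(\<Sum>i\<le>n. occupation_time t i \<omega> * (norm (V i \<omega>))\<^sup>2) \<le> enn2real (occupation_energy t \<omega>)"
    using bounds by (simp add: sum_nonneg)
  have "norm (partial_displacement t n \<omega>) \<le> (\<Sum>i\<le>n. occupation_time t i \<omega> * norm (V i \<omega>))"
    unfolding partial_displacement_def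
    using norm_sum[of "\<lambda>i. occupation_time t i \<omega> *\<^sub>R V i \<omega>" "{..n}"] bounds by simp
  then have "(norm (partial_displacement t n \<omega>))\<^sup>2 \<le> (\<Sum>i\<le>n. occupation_time t i \<omega> * norm (V i \<omega>))\<^sup>2"
    by (intro power_mono) auto
  also have "\<dots> \<le> (\<Sum>i\<le>n. occupation_time t i \<omega>) * (\<Sum>i\<le>n. occupation_time t i \<omega> * (norm (V i \<omega>))\<^sup>2)"
    using bounds by (intro power2_sum_weighted_le) auto
  also have "\<dots> \<le> t * enn2real (occupation_energy t \<omega>)"
    unfolding sum_occupation_time using bounds \<open>0 \<le> t\<close> energy
    by (intro mult_mono sum_nonneg) auto
  finally show ?thesis .
qed

lemma integral_partial_displacement_tendsto_msd:
  assumes "0 \<le> t"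
  shows "(\<lambda>n. \<integral>\<omega>. (norm (partial_displacement t n \<omega>))\<^sup>2 \<partial>M) \<longlonglongrightarrow> msd M S V t"
  unfolding msd_def
proof (rule integral_dominated_convergence)
  have energy_finite: "(\<integral>\<^sup>+\<omega>. occupation_energy t \<omega> \<partial>M) < \<infinity>"
    using nn_integral_occupation_energy_le[OF assms]
    by (rule le_less_trans) (simp add: ennreal_mult_less_top)
  show "AE \<omega> in M. norm ((norm (partial_displacement t n \<omega>))\<^sup>2) \<le> t * enn2real (occupation_energy t \<omega>)" for n
    using occupation_time_bounds_AE[OF assms] finite_nn_integral_imp_ae_finite[OF occupation_energy_measurable energy_finite]
    by eventually_elim (simp add: norm_partial_displacement_square_le[OF assms])
  show "integrable M (\<lambda>\<omega>. t * enn2real (occupation_energy t \<omega>))"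
    unfolding integrable_iff_bounded
  proof
    have "(\<integral>\<^sup>+\<omega>. ennreal (norm (t * enn2real (occupation_energy t \<omega>))) \<partial>M)
            \<le> (\<integral>\<^sup>+\<omega>. ennreal t * occupation_energy t \<omega> \<partial>M)"
      using assms
      by (intro nn_integral_mono) (auto simp: ennreal_mult abs_mult ennreal_enn2real_if intro!: mult_left_mono)
    also have "\<dots> < \<infinity>"
      using energy_finite by (simp add: nn_integral_cmult ennreal_mult_less_top)
    finally show "(\<integral>\<^sup>+\<omega>. ennreal (norm (t * enn2real (occupation_energy t \<omega>))) \<partial>M) < \<infinity>" .
  qed measurable
  show "AE \<omega> in M. (\<lambda>n. (norm (partial_displacement t n \<omega>))\<^sup>2) \<longlonglongrightarrow> (norm (displacement S V t \<omega>))\<^sup>2"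
    using S_pos_all_AE epoch_unbounded_AE
  proof eventually_elim
    case (elim \<omega>)
    obtain m :: nat where "t < real m" using reals_Archimedean2 by blast
    moreover obtain N where "real m < epoch N \<omega>" using elim(2) by blast
    ultimately have "eventually (\<lambda>n. t < epoch n \<omega>) sequentially"
      using epoch_mono[OF elim(1)] unfolding eventually_sequentially
      by (meson less_le_trans less_trans)
    then have "eventually (\<lambda>n. (norm (partial_displacement t n \<omega>))\<^sup>2 = (norm (displacement S V t \<omega>))\<^sup>2) sequentially"
      by eventually_elim (simp add: displacement_eq_partial_displacement[OF assms elim(1)])
    then show ?case by (rule tendsto_eventually)
  qed
qed measurable

theorem mean_time_mult_msd:
  assumes "0 \<le> t"
  shows "mean_time F * msd M S V t = mean_square_speed * msd_kernel_integral F t"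
proof -
  have "(\<lambda>n. \<integral>\<omega>. (norm (partial_displacement t n \<omega>))\<^sup>2 \<partial>M)
          \<longlonglongrightarrow> mean_square_speed * (msd_kernel_integral F t / mean_time F)"
    unfolding integral_norm_partial_displacement_square[OF assms]
    using occupation_time_square_sums[OF assms] by (intro tendsto_mult_left) (simp add: sums_def_le)
  then have "msd M S V t = mean_square_speed * (msd_kernel_integral F t / mean_time F)"
    by (rule LIMSEQ_unique[OF integral_partial_displacement_tendsto_msd[OF assms]])
  then show ?thesis
    using mean_time_pos by simp
qed

end

lemma renewal_velocity_model_if_eq_renewal_setup:
  assumes "eq_renewal_setup M F S V" and "F 0 = 0" and "set_integrable lborel {0..} (\<lambda>s. 1 - F s)"
    and "integrable M (V 0)" "(\<integral>\<omega>. V 0 \<omega> \<partial>M) = 0" "integrable M (\<lambda>\<omega>. (norm (V 0 \<omega>))\<^sup>2)"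
  shows "renewal_velocity_model M F S V"
  using assms
  unfolding eq_renewal_setup_def renewal_velocity_model_def renewal_velocity_model_axioms_def
    equilibrium_renewal_def equilibrium_renewal_axioms_def
  by auto

lemma renewal_velocity_model_same_velocity_law:
  assumes "renewal_velocity_model M F S V" and "eq_renewal_setup N F' S' V'"
    and "F' 0 = 0" and "set_integrable lborel {0..} (\<lambda>s. 1 - F' s)"
    and same_V: "distr N borel (V' 0) = distr M borel (V 0)"
  shows "renewal_velocity_model N F' S' V'"
    and "(\<integral>\<omega>. (norm (V' 0 \<omega>))\<^sup>2 \<partial>N) = (\<integral>\<omega>. (norm (V 0 \<omega>))\<^sup>2 \<partial>M)"
proof -
  interpret renewal_velocity_model M F S V by fact
  have "prob_space N" and "prob_space.indep_vars N (\<lambda>_. borel) V' UNIV"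
    using assms(2) unfolding eq_renewal_setup_def by auto
  then have [measurable]: "V' 0 \<in> borel_measurable N"
    unfolding prob_space.indep_vars_def[OF \<open>prob_space N\<close>] by auto
  have "integrable N (\<lambda>\<omega>. V' 0 \<omega>) \<longleftrightarrow> integrable M (\<lambda>\<omega>. V 0 \<omega>)"
    and "(\<integral>\<omega>. V' 0 \<omega> \<partial>N) = (\<integral>\<omega>. V 0 \<omega> \<partial>M)"
    and "integrable N (\<lambda>\<omega>. (norm (V' 0 \<omega>))\<^sup>2) \<longleftrightarrow> integrable M (\<lambda>\<omega>. (norm (V 0 \<omega>))\<^sup>2)"
    and "(\<integral>\<omega>. (norm (V' 0 \<omega>))\<^sup>2 \<partial>N) = (\<integral>\<omega>. (norm (V 0 \<omega>))\<^sup>2 \<partial>M)"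
    by (rule distr_eq_integrable_iff[OF same_V] distr_eq_integral_eq[OF same_V]; measurable)+
  then show "renewal_velocity_model N F' S' V'"
    using renewal_velocity_model_if_eq_renewal_setup[OF assms(2-4)]
      V_0_integrable V_0_mean_zero V_0_square_integrable
    by simp
  show "(\<integral>\<omega>. (norm (V' 0 \<omega>))\<^sup>2 \<partial>N) = (\<integral>\<omega>. (norm (V 0 \<omega>))\<^sup>2 \<partial>M)"
    by fact
qed

theorem theorem5p2:
  fixes F F' :: "real \<Rightarrow> real"
    and M :: "'a measure" and S :: "nat \<Rightarrow> 'a \<Rightarrow> real" and V :: "nat \<Rightarrow> 'a \<Rightarrow> 'v::euclidean_space"
    and N :: "'b measure" and S' :: "nat \<Rightarrow> 'b \<Rightarrow> real" and V' :: "nat \<Rightarrow> 'b \<Rightarrow> 'v"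
  assumes F_cont: "continuous_on UNIV F" and F'_cont: "continuous_on UNIV F'"
    and F_pos: "F 0 = 0" and F'_pos: "F' 0 = 0"
    and F_mean: "set_integrable lborel {0..} (\<lambda>s. 1 - F s)"
    and F'_mean: "set_integrable lborel {0..} (\<lambda>s. 1 - F' s)"
    and F_var: "nn_integral lborel (\<lambda>s. ennreal (2 * s * (1 - F s)) * indicator {0..} s) = \<infinity>"
    and F'_var: "nn_integral lborel (\<lambda>s. ennreal (2 * s * (1 - F' s)) * indicator {0..} s) = \<infinity>"
    and hyp_setup: "eq_renewal_setup M F S V"
    and hyp_setup': "eq_renewal_setup N F' S' V'"
    and V_mean0: "integrable M (V 0)" "(\<integral>\<omega>. V 0 \<omega> \<partial>M) = 0"
    and V_sq: "integrable M (\<lambda>\<omega>. (norm (V 0 \<omega>))^2)" "(\<integral>\<omega>. (norm (V 0 \<omega>))^2 \<partial>M) > 0"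
    and same_V: "distr N borel (V' 0) = distr M borel (V 0)"
    and tails: "(\<lambda>t. 1 - F t) \<sim>[at_top] (\<lambda>t. 1 - F' t)"
  shows "(\<lambda>t. mean_time F * msd M S V t) \<sim>[at_top] (\<lambda>t. mean_time F' * msd N S' V' t)"
proof -
  have A: "renewal_velocity_model M F S V"
    by (rule renewal_velocity_model_if_eq_renewal_setup[OF hyp_setup F_pos F_mean V_mean0 V_sq(1)])
  interpret A: renewal_velocity_model M F S V by (fact A)
  interpret B: renewal_velocity_model N F' S' V'
    by (rule renewal_velocity_model_same_velocity_law(1)[OF A hyp_setup' F'_pos F'_mean same_V])
  note same_speed = renewal_velocity_model_same_velocity_law(2)[OF A hyp_setup' F'_pos F'_mean same_V]
  have "eventually (\<lambda>t. mean_time F * msd M S V t = A.mean_square_speed * msd_kernel_integral F t) at_top"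
    using eventually_ge_at_top[of 0] by eventually_elim (rule A.mean_time_mult_msd)
  moreover have "eventually (\<lambda>t. mean_time F' * msd N S' V' t
                                 = A.mean_square_speed * msd_kernel_integral F' t) at_top"
    using eventually_ge_at_top[of 0] by eventually_elim (simp add: B.mean_time_mult_msd same_speed)
  moreover have "(\<lambda>t. A.mean_square_speed * msd_kernel_integral F t)
                   \<sim>[at_top] (\<lambda>t. A.mean_square_speed * msd_kernel_integral F' t)"
    using msd_kernel_integral_asymp_equiv[OF A.finite_mean_cdf_axioms B.finite_mean_cdf_axioms F_var tails]
    by (intro asymp_equiv_mult asymp_equiv_refl)
  ultimately show ?thesis
    by (simp add: asymp_equiv_cong)
qed

end
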